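(* Let $w \doteq \delta^n \tau_1^{u_1}\tau_2^{u_2}\cdots\tau_t^{u_t}$ be a word with $n\in\mathbb{Z}$, $t\geq 0$ and all $u_i\geq 1$. Then $w$ is in Xu normal form if and only if one of the following holds: (a) $t=0$, i.e. $w\doteq\delta^n$; (b) $t=1$, and if $n\equiv 1 \pmod 3$ then $u_1=1$ (so $w\doteq \delta^{3k}a^{u_1}$, or $w\doteq\delta^{3k+1}a$, or $w\doteq\delta^{3k+2}a^{u_1}$ for some $k\in\mathbb{Z}$); (c) $t\geq 2$, $n+t\equiv 0\pmod 3$, and the tuple $(u_1,\dots,u_t)$ is lexicographically minimal among all its cyclic permutations.
   Context: $B_3=\langle a,b\mid aba=bab\rangle$. Set $x=a^{-1}ba$ and $\delta=ba$ (so $\delta=ax=xb$). For $i\in\mathbb{Z}$ let $\tau_i=a$ if $i\equiv 1\pmod 3$, $\tau_i=b$ if $i\equiv 2\pmod 3$, $\tau_i=x$ if $i\equiv 0\pmod 3$. A (Xu) word is a word in the letters $a,b,x,\delta$ and their inverses; $\doteq$ denotes equality of words, $=$ equality of braids. A word $w\doteq\delta^n\tau_1^{u_1}\cdots\tau_t^{u_t}$ with $n\in\mathbb{Z}$, $t\geq 0$, $u_i\geq 1$ is in Xu normal form if the tuple $(-n,t,u_1,\dots,u_t)$ is lexicographically minimal among all words of this form representing braids in the same conjugacy class of $B_3$. (Every 3-braid is conjugate to a unique word in Xu normal form.) *)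

theory Defs
  imports Main
begin

text \<open>Braid group B_3 given by the presentation with generators a, b and relation aba = bab.
  Words over a, b and their inverses; a letter is (generator, sign) with True = positive.\<close>

datatype ab = GA | GB

type_synonym abword = "(ab \<times> bool) list"

definition inv_word :: "abword \<Rightarrow> abword" where
  "inv_word w = rev (map (\<lambda>(g, s). (g, \<not> s)) w)"

inductive braid_eq :: "abword \<Rightarrow> abword \<Rightarrow> bool" where
  refl: "braid_eq w w"
| sym: "braid_eq u v \<Longrightarrow> braid_eq v u"
| trans: "braid_eq u v \<Longrightarrow> braid_eq v w \<Longrightarrow> braid_eq u w"
| cancel: "braid_eq (u @ [(g, s), (g, \<not> s)] @ v) (u @ v)"
| braid_rel: "braid_eq (u @ [(GA, True), (GB, True), (GA, True)] @ v)
                       (u @ [(GB, True), (GA, True), (GB, True)] @ v)"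

definition braid_conj :: "abword \<Rightarrow> abword \<Rightarrow> bool" where
  "braid_conj v w \<longleftrightarrow> (\<exists>g. braid_eq (g @ v @ inv_word g) w)"

datatype xu = La | Lb | Lx | Ld

fun xu_val :: "xu \<Rightarrow> abword" where
  "xu_val La = [(GA, True)]"
| "xu_val Lb = [(GB, True)]"
| "xu_val Lx = [(GA, False), (GB, True), (GA, True)]"
| "xu_val Ld = [(GB, True), (GA, True)]"

definition xu_eval :: "(xu \<times> bool) list \<Rightarrow> abword" where
  "xu_eval w = concat (map (\<lambda>(l, s). if s then xu_val l else inv_word (xu_val l)) w)"

definition tau :: "nat \<Rightarrow> xu" where
  "tau i = (if i mod 3 = 1 then La else if i mod 3 = 2 then Lb else Lx)"

text \<open>The word delta^n tau_1^{u_1} ... tau_t^{u_t}, where us = [u_1,...,u_t].\<close>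
definition xu_word :: "int \<Rightarrow> nat list \<Rightarrow> (xu \<times> bool) list" where
  "xu_word n us = replicate (nat \<bar>n\<bar>) (Ld, n \<ge> 0)
     @ concat (map (\<lambda>i. replicate (us ! i) (tau (Suc i), True)) [0..<length us])"

definition lex_le :: "nat list \<Rightarrow> nat list \<Rightarrow> bool" where
  "lex_le us vs \<longleftrightarrow> us = vs \<or> (us, vs) \<in> lexord {(x, y). x < y}"

text \<open>Lexicographic (non-strict) order on tuples (-n, t, u_1, ..., u_t).\<close>
definition xu_tuple_le :: "int \<Rightarrow> nat list \<Rightarrow> int \<Rightarrow> nat list \<Rightarrow> bool" where
  "xu_tuple_le n us n' us' \<longleftrightarrow>
     - n < - n' \<or> (n = n' \<and> (length us < length us' \<or>
        (length us = length us' \<and> lex_le us us')))"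

definition in_xu_nf :: "int \<Rightarrow> nat list \<Rightarrow> bool" where
  "in_xu_nf n us \<longleftrightarrow> (\<forall>n' us'. (\<forall>u\<in>set us'. u \<ge> 1) \<and>
      braid_conj (xu_eval (xu_word n us)) (xu_eval (xu_word n' us'))
        \<longrightarrow> xu_tuple_le n us n' us')"

end

theory Submission
  imports Defs
begin

text \<open>Sending \<open>a \<mapsto> r s\<^sup>-\<^sup>1\<close> and \<open>b \<mapsto> s\<^sup>-\<^sup>1 r\<close> maps \<open>B\<^sub>3\<close> onto the modular group
  \<open>\<langle>r, s | r\<^sup>2 = s\<^sup>3 = 1\<rangle>\<close>, with \<open>\<delta> \<mapsto> s\<close>. In this free product a conjugacy class is
  determined by a cyclically reduced word up to rotation. The image of
  \<open>\<delta>\<^sup>n \<tau>\<^sub>1\<^bsup>u\<^sub>1\<^esup> \<cdots> \<tau>\<^sub>t\<^bsup>u\<^sub>t\<^esup>\<close> is conjugate to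
  \<open>s\<^bsup>n+t\<^esup> \<Prod>\<^sub>i (r s\<^sup>-\<^sup>1)\<^bsup>u\<^sub>i-1\<^esup> r s\<close>; its cyclic reduction contains exactly \<open>\<Sum> u\<^sub>i\<close>
  letters \<open>r\<close> unless \<open>n + t \<equiv> 2 (mod 3)\<close> and \<open>\<Sum> u\<^sub>i \<ge> 2\<close>, and for \<open>n + t \<equiv> 0\<close> it is the
  product itself, from which \<open>(u\<^sub>1, \<dots>, u\<^sub>t)\<close> is recovered up to rotation. Since the exponent sum
  \<open>2n + \<Sum> u\<^sub>i\<close> is also invariant, a conjugate with maximal \<open>r\<close>-count cannot have a larger \<open>n\<close>,
  which shows that the listed words are minimal. Conversely, when a condition fails,
  the relations \<open>\<tau>\<^sub>i \<delta> = \<delta> \<tau>\<^sub>i\<^sub>+\<^sub>1\<close> and \<open>\<tau>\<^sub>i \<tau>\<^sub>i\<^sub>+\<^sub>2 = \<delta>\<close>, the period 3 of \<open>\<tau>\<^sub>i\<close> in \<open>i\<close>, and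
  conjugation by the last block produce a conjugate with larger \<open>n\<close>, fewer blocks, or a
  smaller rotation.\<close>

section \<open>The modular group as the free product of orders two and three\<close>

datatype mletter = R | S | S'

fun letter_inv :: "mletter \<Rightarrow> mletter" where
  "letter_inv R = R" | "letter_inv S = S'" | "letter_inv S' = S"

definition inverse_word :: "mletter list \<Rightarrow> mletter list" where
  "inverse_word X = rev (map letter_inv X)"

lemma inverse_word_Cons: "inverse_word (c # X) = inverse_word X @ [letter_inv c]"
  by (simp add: inverse_word_def)

fun in_Z3 :: "mletter \<Rightarrow> bool" where
  "in_Z3 R = False" | "in_Z3 S = True" | "in_Z3 S' = True"

text \<open>\<open>None\<close> means that the two letters lie in different free factors.\<close>

fun mult_letters :: "mletter \<Rightarrow> mletter \<Rightarrow> mletter list option" where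
  "mult_letters R R = Some []"
| "mult_letters S S = Some [S']"
| "mult_letters S' S' = Some [S]"
| "mult_letters S S' = Some []"
| "mult_letters S' S = Some []"
| "mult_letters _ _ = None"

lemma mult_letters_None_iff: "mult_letters x y = None \<longleftrightarrow> in_Z3 x \<noteq> in_Z3 y"
  by (cases x; cases y; simp)

lemma length_mult_letters: "mult_letters x y = Some f \<Longrightarrow> length f \<le> 1"
  by (cases x; cases y; auto)

fun cons_reduce :: "mletter \<Rightarrow> mletter list \<Rightarrow> mletter list" where
  "cons_reduce c [] = [c]"
| "cons_reduce c (d # X) =
     (case mult_letters c d of None \<Rightarrow> c # d # X | Some f \<Rightarrow> f @ X)"

definition reduce :: "mletter list \<Rightarrow> mletter list" where
  "reduce X = foldr cons_reduce X []"

fun reduced :: "mletter list \<Rightarrow> bool" where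
  "reduced [] = True"
| "reduced [c] = True"
| "reduced (c # d # X) = (mult_letters c d = None \<and> reduced (d # X))"

lemma reduced_Cons_tl: "reduced (c # X) \<Longrightarrow> reduced X"
  by (cases X) auto

lemma reduced_ConsI: "reduced X \<Longrightarrow> X \<noteq> [] \<Longrightarrow> mult_letters c (hd X) = None \<Longrightarrow> reduced (c # X)"
  by (cases X) auto

lemma reduced_append:
  "reduced X \<Longrightarrow> reduced Y \<Longrightarrow> (X \<noteq> [] \<Longrightarrow> Y \<noteq> [] \<Longrightarrow> mult_letters (last X) (hd Y) = None)
    \<Longrightarrow> reduced (X @ Y)"
proof (induction X rule: reduced.induct)
  case (2 c) then show ?case by (cases Y) auto
qed auto

lemma reduced_cons_reduce: "reduced X \<Longrightarrow> reduced (cons_reduce c X)"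
  apply (cases X rule: reduced.cases)
    apply simp
  subgoal for d by (cases c; cases d; simp)
  subgoal for d e Y by (cases Y; cases c; cases d; cases e; auto split: mletter.splits)
  done

lemma reduced_foldr_cons_reduce: "reduced Y \<Longrightarrow> reduced (foldr cons_reduce X Y)"
  by (induction X) (auto intro: reduced_cons_reduce)

lemma reduced_reduce: "reduced (reduce X)"
  unfolding reduce_def by (rule reduced_foldr_cons_reduce) simp

lemma reduce_reduced: "reduced X \<Longrightarrow> reduce X = X"
proof (induction X)
  case (Cons c X)
  then have "reduce X = X" using reduced_Cons_tl by blast
  then show ?case using Cons.prems by (cases X) (auto simp: reduce_def)
qed (simp add: reduce_def)

definition mult_pair :: "mletter \<Rightarrow> mletter \<Rightarrow> mletter list" where
  "mult_pair c d = (case mult_letters c d of None \<Rightarrow> [c, d] | Some f \<Rightarrow> f)"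

lemma cons_reduce_cons_reduce:
  "reduced Z \<Longrightarrow> cons_reduce c (cons_reduce d Z) = foldr cons_reduce (mult_pair c d) Z"
  apply (cases Z rule: reduced.cases)
  subgoal by (cases c; cases d; simp add: mult_pair_def)
  subgoal for e by (cases c; cases d; cases e; simp add: mult_pair_def)
  subgoal for e e' Z' by (cases c; cases d; cases e; cases e'; simp add: mult_pair_def)
  done

lemma cons_reduce_foldr:
  assumes "reduced X" "reduced Y"
  shows "cons_reduce c (foldr cons_reduce X Y) = foldr cons_reduce (cons_reduce c X) Y"
proof (cases X)
  case (Cons d X')
  then have "reduced (foldr cons_reduce X' Y)"
    using assms reduced_Cons_tl reduced_foldr_cons_reduce by blast
  then have "cons_reduce c (foldr cons_reduce X Y) = foldr cons_reduce (mult_pair c d) (foldr cons_reduce X' Y)"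
    using Cons cons_reduce_cons_reduce by simp
  also have "\<dots> = foldr cons_reduce (cons_reduce c X) Y"
    using Cons by (simp add: mult_pair_def split: option.splits)
  finally show ?thesis .
qed simp

lemma foldr_cons_reduce_reduce: "reduced Y \<Longrightarrow> foldr cons_reduce X Y = foldr cons_reduce (reduce X) Y"
proof (induction X)
  case (Cons c X)
  then have "foldr cons_reduce (c # X) Y = cons_reduce c (foldr cons_reduce (reduce X) Y)"
    by simp
  also have "\<dots> = foldr cons_reduce (cons_reduce c (reduce X)) Y"
    by (rule cons_reduce_foldr[OF reduced_reduce Cons.prems])
  finally show ?case by (simp add: reduce_def)
qed (simp add: reduce_def)

lemma reduce_append_foldr: "reduce (X @ Y) = foldr cons_reduce X (reduce Y)"
  by (simp add: reduce_def)

lemma reduce_append: "reduce (X @ Y) = reduce (reduce X @ reduce Y)"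
proof -
  have "reduce (X @ Y) = foldr cons_reduce X (reduce Y)" by (rule reduce_append_foldr)
  also have "\<dots> = foldr cons_reduce (reduce X) (reduce Y)"
    using foldr_cons_reduce_reduce reduced_reduce by blast
  also have "\<dots> = reduce (reduce X @ reduce Y)"
    by (simp add: reduce_append_foldr reduce_reduced reduced_reduce)
  finally show ?thesis .
qed

lemma reduce_reduce [simp]: "reduce (reduce X) = reduce X"
  by (simp add: reduce_reduced reduced_reduce)

definition meq :: "mletter list \<Rightarrow> mletter list \<Rightarrow> bool" where
  "meq X Y \<longleftrightarrow> reduce X = reduce Y"

lemma meq_refl [simp]: "meq X X" by (simp add: meq_def)
lemma meq_sym: "meq X Y \<Longrightarrow> meq Y X" by (simp add: meq_def)
lemma meq_trans [trans]: "meq X Y \<Longrightarrow> meq Y Z \<Longrightarrow> meq X Z" by (simp add: meq_def)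
lemma meq_append: "meq X X' \<Longrightarrow> meq Y Y' \<Longrightarrow> meq (X @ Y) (X' @ Y')"
  unfolding meq_def by (metis reduce_append)
lemma meq_reduce: "meq X (reduce X)" by (simp add: meq_def)

section \<open>Cyclic reduction and rotations\<close>

function cyc_reduce :: "mletter list \<Rightarrow> mletter list" where
  "cyc_reduce X = (if length X \<le> 1 then X else
     (case mult_letters (last X) (hd X) of None \<Rightarrow> X
      | Some f \<Rightarrow> cyc_reduce (f @ butlast (tl X))))"
  by pat_completeness auto
termination
  by (relation "measure length") (auto dest: length_mult_letters)

declare cyc_reduce.simps [simp del]

lemma cyc_reduce_short [simp]: "length X \<le> 1 \<Longrightarrow> cyc_reduce X = X"
  by (simp add: cyc_reduce.simps)

lemma cyc_reduce_stop:
  "2 \<le> length X \<Longrightarrow> in_Z3 (last X) \<noteq> in_Z3 (hd X) \<Longrightarrow> cyc_reduce X = X"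
  using mult_letters_None_iff [of "last X" "hd X"] by (subst cyc_reduce.simps) simp

lemma cyc_reduce_step:
  "2 \<le> length X \<Longrightarrow> in_Z3 (last X) = in_Z3 (hd X) \<Longrightarrow>
   cyc_reduce X = cyc_reduce (the (mult_letters (last X) (hd X)) @ butlast (tl X))"
  using mult_letters_None_iff [of "last X" "hd X"]
  by (subst cyc_reduce.simps) (auto split: option.split)

lemma count_list_butlast_le: "count_list (butlast X) c \<le> count_list X c"
  by (induction X) auto

lemma count_cyc_reduce_R: "count_list (cyc_reduce X) R \<le> count_list X R"
proof (induction X rule: cyc_reduce.induct)
  case (1 X)
  show ?case
  proof (cases "length X \<le> 1 \<or> mult_letters (last X) (hd X) = None")
    case True
    then show ?thesis by (subst cyc_reduce.simps) auto
  next
    case False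
    then obtain f where long: "\<not> length X \<le> 1" and f: "mult_letters (last X) (hd X) = Some f"
      by auto
    have "count_list f R = 0"
      using f by (cases "last X"; cases "hd X"; auto)
    moreover have "count_list (butlast (tl X)) R \<le> count_list X R"
      using count_list_butlast_le [of "tl X" R] long by (cases X) auto
    ultimately have "count_list (f @ butlast (tl X)) R \<le> count_list X R"
      by simp
    then show ?thesis
      using "1" [OF long f] long f by (subst cyc_reduce.simps) simp
  qed
qed

definition rotation_of :: "'a list \<Rightarrow> 'a list \<Rightarrow> bool" where
  "rotation_of X Y \<longleftrightarrow> (\<exists>k. X = rotate k Y)"

lemma rotation_of_refl [simp]: "rotation_of X X"
  unfolding rotation_of_def by (rule exI [of _ 0]) simp

lemma rotation_of_trans: "rotation_of X Y \<Longrightarrow> rotation_of Y Z \<Longrightarrow> rotation_of X Z"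
  unfolding rotation_of_def by (auto simp: rotate_rotate)

lemma rotation_of_sym: "rotation_of X Y \<Longrightarrow> rotation_of Y X"
proof -
  assume "rotation_of X Y"
  then obtain k where X: "X = rotate k Y" by (auto simp: rotation_of_def)
  let ?l = "length Y"
  have "rotate (?l - k mod ?l) X = Y"
  proof (cases "Y = []")
    case False
    then have "?l > 0" by simp
    have "k mod ?l \<le> k" by simp
    then have "?l - k mod ?l + k = ?l * Suc (k div ?l)"
      using \<open>?l > 0\<close> by (metis add.commute add_diff_assoc2 minus_mod_eq_mult_div
          mod_less_divisor less_imp_le mult_Suc_right)
    then have "(?l - k mod ?l + k) mod ?l = 0"
      by simp
    then show ?thesis by (simp add: X rotate_rotate rotate_id)
  qed (simp add: X)
  then show ?thesis unfolding rotation_of_def by metis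
qed

lemma rotation_of_append_swap: "rotation_of (X @ Y) (Y @ X)"
  unfolding rotation_of_def
  by (rule exI [of _ "length Y"]) (simp add: rotate_append)

lemma rotation_of_Cons_snoc: "rotation_of (x # X) (X @ [x])"
  using rotation_of_append_swap [of "[x]" X] by simp

lemma rotation_of_snoc_Cons: "rotation_of (X @ [x]) (x # X)"
  using rotation_of_append_swap [of X "[x]"] by simp

lemmas rotation_of_rules =
  rotation_of_Cons_snoc rotation_of_snoc_Cons rotation_of_Cons_snoc [of x "[y]" for x y, simplified]
  rotation_of_Cons_snoc [of x "y # X" for x y X, simplified]
  rotation_of_snoc_Cons [of "y # X" x for x y X, simplified]
  rotation_of_Cons_snoc [of x "X @ [y]" for x y X, simplified]
  rotation_of_snoc_Cons [of "X @ [y]" x for x y X, simplified]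

lemma count_list_rotate: "count_list (rotate k X) c = count_list X c"
proof -
  let ?m = "k mod length X"
  have "count_list X c = count_list (take ?m X @ drop ?m X) c" by simp
  also have "\<dots> = count_list (drop ?m X @ take ?m X) c"
    by (simp only: count_list_append add.commute)
  finally show ?thesis by (simp only: rotate_drop_take)
qed

lemma rotation_of_count_list: "rotation_of X Y \<Longrightarrow> count_list X c = count_list Y c"
  unfolding rotation_of_def using count_list_rotate by auto

lemma reduced_ends:
  assumes "reduced (d # M @ [e])"
  shows "M = [] \<Longrightarrow> in_Z3 d \<noteq> in_Z3 e"
    and "M \<noteq> [] \<Longrightarrow> in_Z3 (hd M) \<noteq> in_Z3 d"
    and "M \<noteq> [] \<Longrightarrow> in_Z3 (last M) \<noteq> in_Z3 e"
proof -
  show "M = [] \<Longrightarrow> in_Z3 d \<noteq> in_Z3 e"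
    using assms by (simp add: mult_letters_None_iff)
  show "M \<noteq> [] \<Longrightarrow> in_Z3 (hd M) \<noteq> in_Z3 d"
    using assms by (cases M) (auto simp: mult_letters_None_iff)
  have "reduced (x # M @ [e]) \<Longrightarrow> M \<noteq> [] \<Longrightarrow> in_Z3 (last M) \<noteq> in_Z3 e" for x
  proof (induction M arbitrary: x)
    case (Cons a M)
    show ?case
    proof (cases M)
      case Nil
      then show ?thesis using Cons.prems by (auto simp: mult_letters_None_iff)
    next
      case (Cons b M')
      then show ?thesis using Cons.IH [of a] Cons.prems by auto
    qed
  qed simp
  then show "M \<noteq> [] \<Longrightarrow> in_Z3 (last M) \<noteq> in_Z3 e"
    using assms by blast
qed

lemma reduce_snoc:
  assumes "reduced X"
  shows "reduce (X @ [c]) = (if X = [] then [c] else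
     (case mult_letters (last X) c of None \<Rightarrow> X @ [c] | Some f \<Rightarrow> butlast X @ f))"
  using assms
proof (induction X rule: reduced.induct)
  case (2 d)
  then show ?case by (cases "mult_letters d c") (simp_all add: reduce_def)
next
  case (3 d e X)
  have IH: "reduce ((e # X) @ [c]) = (case mult_letters (last (e # X)) c of
      None \<Rightarrow> (e # X) @ [c] | Some f \<Rightarrow> butlast (e # X) @ f)"
    using 3 by simp
  have eq: "reduce ((d # e # X) @ [c]) = cons_reduce d (reduce ((e # X) @ [c]))"
    by (simp add: reduce_def)
  show ?case
  proof (cases "mult_letters (last (e # X)) c")
    case (Some f)
    then show ?thesis
      using eq IH 3(2) by (cases X; cases d; cases e; cases c; auto simp: reduce_def)
  qed (use eq IH 3(2) in simp)
qed (simp add: reduce_def)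

lemma cyc_reduce_conj_letter:
  assumes "reduced W"
  shows "rotation_of (cyc_reduce (reduce (c # W @ [letter_inv c]))) (cyc_reduce W)"
proof -
  consider "W = []" | h where "W = [h]" | d M e where "W = d # M @ [e]"
    by (metis neq_Nil_conv rev_exhaust)
  then show ?thesis
  proof cases
    case 1
    then show ?thesis by (cases c; simp add: reduce_def)
  next
    case 2
    then show ?thesis by (cases c; cases h; simp add: reduce_def cyc_reduce_step)
  next
    case 3
    have T: "reduce (c # W @ [letter_inv c]) = cons_reduce c (reduce (W @ [letter_inv c]))"
      by (simp add: reduce_def)
    have S: "reduce (W @ [letter_inv c]) = (case mult_letters e (letter_inv c) of
        None \<Rightarrow> d # M @ [e, letter_inv c] | Some f \<Rightarrow> d # M @ f)"
      using reduce_snoc [OF assms, of "letter_inv c"] 3 by (simp split: option.splits)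
    note E = reduced_ends [OF assms [unfolded 3]]
    show ?thesis
    proof (cases "M = []")
      case True
      then show ?thesis using T S 3 E
        by (cases c; cases d; cases e; simp add: cyc_reduce_step cyc_reduce_stop rotation_of_rules)
    next
      case False
      then have "length M \<ge> 1" by (cases M) auto
      then show ?thesis using T S 3 E False
        by (cases c; cases d; cases e;
            simp add: cyc_reduce_step cyc_reduce_stop rotation_of_rules hd_append butlast_append)
    qed
  qed
qed

lemma cyc_reduce_conj:
  assumes "reduced W"
  shows "rotation_of (cyc_reduce (reduce (G @ W @ inverse_word G))) (cyc_reduce W)"
proof (induction G)
  case Nil
  then show ?case using assms by (simp add: inverse_word_def reduce_reduced)
next
  case (Cons c G)
  let ?X = "G @ W @ inverse_word G"
  have "meq ([c] @ ?X @ [letter_inv c]) ([c] @ reduce ?X @ [letter_inv c])"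
    by (intro meq_append meq_reduce meq_refl)
  then have e: "reduce ((c # G) @ W @ inverse_word (c # G)) = reduce (c # reduce ?X @ [letter_inv c])"
    by (simp add: meq_def inverse_word_Cons)
  show ?case
    unfolding e using rotation_of_trans [OF cyc_reduce_conj_letter [OF reduced_reduce] Cons.IH] .
qed

section \<open>A homomorphism from \<open>B\<^sub>3\<close> onto the modular group\<close>

fun letter_image :: "ab \<times> bool \<Rightarrow> mletter list" where
  "letter_image (GA, True) = [R, S']"
| "letter_image (GB, True) = [S', R]"
| "letter_image (GA, False) = [S, R]"
| "letter_image (GB, False) = [R, S]"

definition modular_image :: "abword \<Rightarrow> mletter list" where
  "modular_image w = concat (map letter_image w)"

lemma modular_image_Nil [simp]: "modular_image [] = []"
  by (simp add: modular_image_def)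

lemma modular_image_Cons: "modular_image (x # w) = letter_image x @ modular_image w"
  by (simp add: modular_image_def)

lemma modular_image_append [simp]: "modular_image (u @ v) = modular_image u @ modular_image v"
  by (simp add: modular_image_def)

lemma braid_eq_modular_image: "braid_eq u v \<Longrightarrow> meq (modular_image u) (modular_image v)"
proof (induction rule: braid_eq.induct)
  case (cancel u g s v)
  have "meq (letter_image (g, s) @ letter_image (g, \<not> s)) []"
    by (cases g; cases s; simp add: meq_def reduce_def)
  then have "meq (modular_image u @ (letter_image (g, s) @ letter_image (g, \<not> s)) @ modular_image v)
      (modular_image u @ [] @ modular_image v)"
    by (intro meq_append) auto
  then show ?case by (simp add: modular_image_Cons)
next
  case (braid_rel u v)
  have aba: "meq (letter_image (GA, True) @ letter_image (GB, True) @ letter_image (GA, True))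
      (letter_image (GB, True) @ letter_image (GA, True) @ letter_image (GB, True))"
    by (simp add: meq_def reduce_def)
  have "meq (modular_image u @
        (letter_image (GA, True) @ letter_image (GB, True) @ letter_image (GA, True)) @ modular_image v)
      (modular_image u @
        (letter_image (GB, True) @ letter_image (GA, True) @ letter_image (GB, True)) @ modular_image v)"
    by (intro meq_append [OF meq_refl meq_append [OF aba meq_refl]])
  then show ?case by (simp add: modular_image_Cons)
qed (auto intro: meq_sym meq_trans)

lemma modular_image_inv_word: "modular_image (inv_word g) = inverse_word (modular_image g)"
proof (induction g)
  case (Cons l g)
  obtain x s where l: "l = (x, s)" by force
  have "inv_word (l # g) = inv_word g @ [(x, \<not> s)]" by (simp add: inv_word_def l)
  then show ?case
    using Cons by (cases x; cases s; simp add: l inverse_word_def modular_image_Cons)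
qed (simp add: inv_word_def inverse_word_def)

definition cyc_class :: "abword \<Rightarrow> mletter list" where
  "cyc_class w = cyc_reduce (reduce (modular_image w))"

lemma braid_conj_cyc_class:
  assumes "braid_conj v w"
  shows "rotation_of (cyc_class w) (cyc_class v)"
proof -
  obtain g where g: "braid_eq (g @ v @ inv_word g) w"
    using assms by (auto simp: braid_conj_def)
  have "reduce (modular_image w)
      = reduce (modular_image g @ modular_image v @ inverse_word (modular_image g))"
    using braid_eq_modular_image [OF g] by (simp add: meq_def modular_image_inv_word)
  also have "\<dots> = reduce (modular_image g @ reduce (modular_image v) @ inverse_word (modular_image g))"
    using meq_append [OF meq_refl meq_append [OF meq_reduce meq_refl]] by (simp add: meq_def)
  finally show ?thesis
    unfolding cyc_class_def using cyc_reduce_conj [OF reduced_reduce] by simp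
qed

definition exp_sum :: "abword \<Rightarrow> int" where
  "exp_sum w = sum_list (map (\<lambda>(g, s). if s then 1 else -1) w)"

lemma exp_sum_Nil [simp]: "exp_sum [] = 0"
  by (simp add: exp_sum_def)

lemma exp_sum_append [simp]: "exp_sum (u @ v) = exp_sum u + exp_sum v"
  by (simp add: exp_sum_def)

lemma exp_sum_concat_replicate: "exp_sum (concat (replicate k w)) = int k * exp_sum w"
  by (induction k) (auto simp: algebra_simps)

lemma braid_eq_exp_sum: "braid_eq u v \<Longrightarrow> exp_sum u = exp_sum v"
  by (induction rule: braid_eq.induct) (auto simp: exp_sum_def)

lemma exp_sum_inv_word: "exp_sum (inv_word g) = - exp_sum g"
  by (induction g) (auto simp: exp_sum_def inv_word_def)

lemma braid_conj_exp_sum: "braid_conj v w \<Longrightarrow> exp_sum v = exp_sum w"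
  unfolding braid_conj_def using braid_eq_exp_sum exp_sum_inv_word by fastforce

section \<open>Calculus of braid words\<close>

notation braid_eq (infix "\<approx>" 50)

declare braid_eq.trans [trans]

lemma braid_eq_context: "u \<approx> v \<Longrightarrow> p @ u @ q \<approx> p @ v @ q"
proof (induction arbitrary: p q rule: braid_eq.induct)
  case (cancel u g s v)
  show ?case using braid_eq.cancel [of "p @ u" g s "v @ q"] by simp
next
  case (braid_rel u v)
  show ?case using braid_eq.braid_rel [of "p @ u" "v @ q"] by simp
qed (blast intro: braid_eq.intros)+

lemma braid_eq_append: "a \<approx> a' \<Longrightarrow> b \<approx> b' \<Longrightarrow> a @ b \<approx> a' @ b'"
  using braid_eq_context [of a a' "[]" b] braid_eq_context [of b b' a' "[]"]
  by (auto intro: braid_eq.trans)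

lemma inv_word_Nil [simp]: "inv_word [] = []"
  by (simp add: inv_word_def)

lemma inv_word_inv_word [simp]: "inv_word (inv_word w) = w"
  by (induction w) (auto simp: inv_word_def)

lemma inv_word_append [simp]: "inv_word (u @ v) = inv_word v @ inv_word u"
  by (simp add: inv_word_def)

lemma braid_eq_inv_right: "w @ inv_word w \<approx> []"
proof (induction w)
  case (Cons x w)
  obtain g s where x: "x = (g, s)" by force
  have "[x] @ (w @ inv_word w) @ [(g, \<not> s)] \<approx> [x] @ [] @ [(g, \<not> s)]"
    using braid_eq_context [OF Cons.IH] by blast
  moreover have "[] @ [(g, s), (g, \<not> s)] @ [] \<approx> [] @ []"
    by (rule braid_eq.cancel)
  ultimately show ?case
    using braid_eq.trans x by (auto simp: inv_word_def)
qed (simp add: braid_eq.refl)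

lemma braid_eq_inv_left: "inv_word w @ w \<approx> []"
  using braid_eq_inv_right [of "inv_word w"] by simp

lemma braid_conj_refl: "braid_conj u u"
  unfolding braid_conj_def by (rule exI [of _ "[]"]) (simp add: braid_eq.refl)

lemma braid_conj_braid_eq [trans]: "braid_conj u v \<Longrightarrow> v \<approx> w \<Longrightarrow> braid_conj u w"
  unfolding braid_conj_def using braid_eq.trans by blast

lemma braid_conj_sym: "braid_conj u v \<Longrightarrow> braid_conj v u"
proof -
  assume "braid_conj u v"
  then obtain g where g: "g @ u @ inv_word g \<approx> v" by (auto simp: braid_conj_def)
  have "inv_word g @ v @ g \<approx> inv_word g @ (g @ u @ inv_word g) @ g"
    by (intro braid_eq_append braid_eq.refl braid_eq.sym [OF g])
  also have "\<dots> = (inv_word g @ g) @ u @ (inv_word g @ g)" by simp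
  also have "\<dots> \<approx> [] @ u @ []"
    by (intro braid_eq_append braid_eq.refl braid_eq_inv_left)
  finally have "inv_word g @ v @ inv_word (inv_word g) \<approx> u" by simp
  then show ?thesis unfolding braid_conj_def by blast
qed

lemma braid_conj_trans: "braid_conj u v \<Longrightarrow> braid_conj v w \<Longrightarrow> braid_conj u w"
proof -
  assume "braid_conj u v" "braid_conj v w"
  then obtain g h where g: "g @ u @ inv_word g \<approx> v" and h: "h @ v @ inv_word h \<approx> w"
    by (auto simp: braid_conj_def)
  have "(h @ g) @ u @ inv_word (h @ g) = h @ (g @ u @ inv_word g) @ inv_word h" by simp
  also have "\<dots> \<approx> h @ v @ inv_word h" by (intro braid_eq_append braid_eq.refl g)
  also note h
  finally show ?thesis unfolding braid_conj_def by blast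
qed

definition delta :: abword where
  "delta = [(GB, True), (GA, True)]"

definition delta_pow :: "int \<Rightarrow> abword" where
  "delta_pow n = concat (replicate (nat \<bar>n\<bar>) (if n \<ge> 0 then delta else inv_word delta))"

lemma delta_pow_0 [simp]: "delta_pow 0 = []"
  by (simp add: delta_pow_def)

lemma delta_pow_1: "delta_pow 1 = delta"
  by (simp add: delta_pow_def)

lemma delta_pow_minus_1: "delta_pow (-1) = inv_word delta"
  by (simp add: delta_pow_def)

lemma delta_pow_succ_nonneg: "n \<ge> 0 \<Longrightarrow> delta_pow (n + 1) = delta_pow n @ delta"
proof -
  assume "n \<ge> 0"
  then have "nat \<bar>n + 1\<bar> = Suc (nat \<bar>n\<bar>)" by simp
  then show ?thesis
    using \<open>n \<ge> 0\<close> by (simp add: delta_pow_def replicate_append_same [symmetric])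
qed

lemma delta_pow_neg: "n < 0 \<Longrightarrow> delta_pow n = delta_pow (n + 1) @ inv_word delta"
proof -
  assume "n < 0"
  then have "nat \<bar>n\<bar> = Suc (nat \<bar>n + 1\<bar>)" by simp
  then show ?thesis
    using \<open>n < 0\<close> by (simp add: delta_pow_def replicate_append_same [symmetric])
qed

lemma delta_pow_append_delta: "delta_pow n @ delta \<approx> delta_pow (n + 1)"
proof (cases "n \<ge> 0")
  case True
  then show ?thesis by (simp add: delta_pow_succ_nonneg braid_eq.refl)
next
  case False
  then have "delta_pow n @ delta = delta_pow (n + 1) @ inv_word delta @ delta"
    using delta_pow_neg by simp
  also have "\<dots> \<approx> delta_pow (n + 1) @ []"
    by (rule braid_eq_append [OF braid_eq.refl braid_eq_inv_left])
  finally show ?thesis by simp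
qed

lemma delta_pow_append_inv_delta: "delta_pow n @ inv_word delta \<approx> delta_pow (n - 1)"
proof (cases "n - 1 < 0")
  case True
  then show ?thesis using delta_pow_neg [of "n - 1"] by (simp add: braid_eq.refl)
next
  case False
  then have "delta_pow n @ inv_word delta = delta_pow (n - 1) @ delta @ inv_word delta"
    using delta_pow_succ_nonneg [of "n - 1"] by simp
  also have "\<dots> \<approx> delta_pow (n - 1) @ []"
    by (rule braid_eq_append [OF braid_eq.refl braid_eq_inv_right])
  finally show ?thesis by simp
qed

lemma delta_pow_add: "delta_pow a @ delta_pow b \<approx> delta_pow (a + b)"
proof (induction b rule: int_induct [where k = 0])
  case (step1 i)
  have "delta_pow a @ delta_pow (i + 1) \<approx> (delta_pow a @ delta_pow i) @ delta"
    using braid_eq_append [OF braid_eq.refl braid_eq.sym [OF delta_pow_append_delta]] by simp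
  also have "\<dots> \<approx> delta_pow (a + i) @ delta"
    by (rule braid_eq_append [OF step1.IH braid_eq.refl])
  also have "\<dots> \<approx> delta_pow (a + (i + 1))"
    using delta_pow_append_delta [of "a + i"] by (simp add: add.assoc)
  finally show ?case .
next
  case (step2 i)
  have "delta_pow a @ delta_pow (i - 1) \<approx> (delta_pow a @ delta_pow i) @ inv_word delta"
    using braid_eq_append [OF braid_eq.refl braid_eq.sym [OF delta_pow_append_inv_delta]] by simp
  also have "\<dots> \<approx> delta_pow (a + i) @ inv_word delta"
    by (rule braid_eq_append [OF step2.IH braid_eq.refl])
  also have "\<dots> \<approx> delta_pow (a + (i - 1))"
    using delta_pow_append_inv_delta [of "a + i"] by (simp add: algebra_simps)
  finally show ?case .
qed (simp add: braid_eq.refl)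

definition tau_word :: "int \<Rightarrow> abword" where
  "tau_word i = xu_val (if i mod 3 = 1 then La else if i mod 3 = 2 then Lb else Lx)"

lemma tau_word_mod3: "i mod 3 = k mod 3 \<Longrightarrow> tau_word i = tau_word k"
  by (simp add: tau_word_def)

lemma mod3_cases:
  fixes i :: int
  obtains "i mod 3 = 0" | "i mod 3 = 1" | "i mod 3 = 2"
  by atomize_elim presburger

lemma tau_word_delta: "tau_word i @ delta \<approx> delta @ tau_word (i + 1)"
proof (cases i rule: mod3_cases)
  case 1
  then have "(i + 1) mod 3 = 1" by presburger
  have "[(GA, False), (GB, True), (GA, True), (GB, True), (GA, True)]
      \<approx> [(GA, False), (GA, True), (GB, True), (GA, True), (GA, True)]"
    using braid_eq.sym [OF braid_eq.braid_rel [of "[(GA, False)]" "[(GA, True)]"]] by simp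
  also have "\<dots> \<approx> [(GB, True), (GA, True), (GA, True)]"
    using braid_eq.cancel [of "[]" GA False "[(GB, True), (GA, True), (GA, True)]"] by simp
  finally show ?thesis
    using 1 \<open>(i + 1) mod 3 = 1\<close> by (simp add: tau_word_def delta_def)
next
  case 2
  then have "(i + 1) mod 3 = 2" by presburger
  then show ?thesis
    using 2 braid_eq.braid_rel [of "[]" "[]"] by (simp add: tau_word_def delta_def)
next
  case 3
  then have "(i + 1) mod 3 = 0" by presburger
  then show ?thesis
    using 3 braid_eq.sym [OF braid_eq.cancel [of "[(GB, True)]" GA True "[(GB, True), (GA, True)]"]]
    by (simp add: tau_word_def delta_def)
qed

lemma tau_word_inv_delta: "tau_word i @ inv_word delta \<approx> inv_word delta @ tau_word (i - 1)"
proof -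
  have "tau_word i @ inv_word delta \<approx> (inv_word delta @ delta) @ tau_word i @ inv_word delta"
    using braid_eq_append [OF braid_eq.sym [OF braid_eq_inv_left] braid_eq.refl] by simp
  also have "\<dots> = inv_word delta @ (delta @ tau_word (i - 1 + 1)) @ inv_word delta" by simp
  also have "\<dots> \<approx> inv_word delta @ (tau_word (i - 1) @ delta) @ inv_word delta"
    by (rule braid_eq_context [OF braid_eq.sym [OF tau_word_delta]])
  also have "\<dots> = (inv_word delta @ tau_word (i - 1)) @ (delta @ inv_word delta)" by simp
  also have "\<dots> \<approx> (inv_word delta @ tau_word (i - 1)) @ []"
    by (rule braid_eq_append [OF braid_eq.refl braid_eq_inv_right])
  finally show ?thesis by simp
qed

lemma tau_word_delta_pow: "tau_word i @ delta_pow n \<approx> delta_pow n @ tau_word (i + n)"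
proof (induction n rule: int_induct [where k = 0])
  case (step1 k)
  have "tau_word i @ delta_pow (k + 1) \<approx> (tau_word i @ delta_pow k) @ delta"
    using braid_eq_append [OF braid_eq.refl braid_eq.sym [OF delta_pow_append_delta]] by simp
  also have "\<dots> \<approx> (delta_pow k @ tau_word (i + k)) @ delta"
    by (rule braid_eq_append [OF step1.IH braid_eq.refl])
  also have "\<dots> \<approx> delta_pow k @ (delta @ tau_word (i + k + 1))"
    using braid_eq_append [OF braid_eq.refl tau_word_delta] by simp
  also have "\<dots> \<approx> delta_pow (k + 1) @ tau_word (i + (k + 1))"
    using braid_eq_append [OF delta_pow_append_delta braid_eq.refl] by (simp add: add.assoc)
  finally show ?case .
next
  case (step2 k)
  have "tau_word i @ delta_pow (k - 1) \<approx> (tau_word i @ delta_pow k) @ inv_word delta"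
    using braid_eq_append [OF braid_eq.refl braid_eq.sym [OF delta_pow_append_inv_delta]] by simp
  also have "\<dots> \<approx> (delta_pow k @ tau_word (i + k)) @ inv_word delta"
    by (rule braid_eq_append [OF step2.IH braid_eq.refl])
  also have "\<dots> \<approx> delta_pow k @ (inv_word delta @ tau_word (i + k - 1))"
    using braid_eq_append [OF braid_eq.refl tau_word_inv_delta] by simp
  also have "\<dots> \<approx> delta_pow (k - 1) @ tau_word (i + (k - 1))"
    using braid_eq_append [OF delta_pow_append_inv_delta braid_eq.refl] by (simp add: algebra_simps)
  finally show ?case .
qed (simp add: braid_eq.refl)

lemma tau_word_gap: "tau_word i @ tau_word (i + 2) \<approx> delta"
proof (cases i rule: mod3_cases)
  case 1
  then have "(i + 2) mod 3 = 2" by presburger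
  have "[(GA, False), (GB, True), (GA, True), (GB, True)]
      \<approx> [(GA, False), (GA, True), (GB, True), (GA, True)]"
    using braid_eq.sym [OF braid_eq.braid_rel [of "[(GA, False)]" "[]"]] by simp
  also have "\<dots> \<approx> [(GB, True), (GA, True)]"
    using braid_eq.cancel [of "[]" GA False "[(GB, True), (GA, True)]"] by simp
  finally show ?thesis
    using 1 \<open>(i + 2) mod 3 = 2\<close> by (simp add: tau_word_def delta_def)
next
  case 2
  then have "(i + 2) mod 3 = 0" by presburger
  then show ?thesis
    using 2 braid_eq.cancel [of "[]" GA True "[(GB, True), (GA, True)]"]
    by (simp add: tau_word_def delta_def)
next
  case 3
  then have "(i + 2) mod 3 = 1" by presburger
  then show ?thesis using 3 by (simp add: tau_word_def delta_def braid_eq.refl)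
qed

definition tau_power :: "int \<Rightarrow> nat \<Rightarrow> abword" where
  "tau_power i u = concat (replicate u (tau_word i))"

lemma tau_power_add: "tau_power i (a + b) = tau_power i a @ tau_power i b"
  by (simp add: tau_power_def replicate_add)

lemma tau_power_mod3: "i mod 3 = k mod 3 \<Longrightarrow> tau_power i u = tau_power k u"
  unfolding tau_power_def by (drule tau_word_mod3) simp

lemma tau_power_delta_pow: "tau_power i u @ delta_pow n \<approx> delta_pow n @ tau_power (i + n) u"
proof (induction u)
  case (Suc u)
  have "tau_power i (Suc u) @ delta_pow n = tau_word i @ (tau_power i u @ delta_pow n)"
    by (simp add: tau_power_def)
  also have "\<dots> \<approx> (tau_word i @ delta_pow n) @ tau_power (i + n) u"
    using braid_eq_append [OF braid_eq.refl Suc.IH] by simp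
  also have "\<dots> \<approx> (delta_pow n @ tau_word (i + n)) @ tau_power (i + n) u"
    by (rule braid_eq_append [OF tau_word_delta_pow braid_eq.refl])
  finally show ?case by (simp add: tau_power_def)
qed (simp add: tau_power_def braid_eq.refl)

fun tau_blocks :: "int \<Rightarrow> nat list \<Rightarrow> abword" where
  "tau_blocks j [] = []"
| "tau_blocks j (u # us) = tau_power j u @ tau_blocks (j + 1) us"

lemma tau_blocks_delta_pow: "tau_blocks j us @ delta_pow n \<approx> delta_pow n @ tau_blocks (j + n) us"
proof (induction us arbitrary: j)
  case (Cons u us)
  have "tau_blocks j (u # us) @ delta_pow n = tau_power j u @ (tau_blocks (j + 1) us @ delta_pow n)"
    by simp
  also have "\<dots> \<approx> (tau_power j u @ delta_pow n) @ tau_blocks (j + 1 + n) us"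
    using braid_eq_append [OF braid_eq.refl Cons.IH] by simp
  also have "\<dots> \<approx> (delta_pow n @ tau_power (j + n) u) @ tau_blocks (j + 1 + n) us"
    by (rule braid_eq_append [OF tau_power_delta_pow braid_eq.refl])
  finally show ?case by (simp add: algebra_simps)
qed (simp add: braid_eq.refl)

lemma tau_blocks_mod3: "j mod 3 = k mod 3 \<Longrightarrow> tau_blocks j us = tau_blocks k us"
proof (induction us arbitrary: j k)
  case (Cons u us)
  have "(j + 1) mod 3 = (k + 1) mod 3" using Cons.prems by presburger
  from Cons.IH [OF this] tau_power_mod3 [OF Cons.prems] show ?case by simp
qed simp

lemma tau_blocks_append:
  "tau_blocks j (p @ q) = tau_blocks j p @ tau_blocks (j + int (length p)) q"
  by (induction p arbitrary: j) (auto simp: algebra_simps)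

lemma tau_blocks_replicate_0: "tau_blocks j (replicate L 0 @ us) = tau_blocks (j + int L) us"
  by (induction L arbitrary: j) (auto simp: tau_power_def algebra_simps)

text \<open>\<open>xu_braid n j us\<close> is \<open>\<delta>\<^sup>n \<tau>\<^sub>j\<^bsup>u\<^sub>1\<^esup> \<tau>\<^sub>j\<^sub>+\<^sub>1\<^bsup>u\<^sub>2\<^esup> \<dots>\<close>; zero exponents are allowed.\<close>

definition xu_braid :: "int \<Rightarrow> int \<Rightarrow> nat list \<Rightarrow> abword" where
  "xu_braid n j us = delta_pow n @ tau_blocks j us"

lemma xu_braid_mod3: "j mod 3 = k mod 3 \<Longrightarrow> xu_braid n j us = xu_braid n k us"
  unfolding xu_braid_def by (drule tau_blocks_mod3 [of _ _ us]) simp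

lemma xu_braid_Cons_0: "xu_braid n j (0 # us) = xu_braid n (j + 1) us"
  by (simp add: xu_braid_def tau_power_def)

lemma xu_braid_snoc_0: "xu_braid n j (us @ [0]) = xu_braid n j us"
  by (simp add: xu_braid_def tau_blocks_append tau_power_def)

lemma xu_braid_remove_three_0: "xu_braid n j (p @ [0, 0, 0] @ q) = xu_braid n j (p @ q)"
proof -
  let ?i = "j + int (length p)"
  have "(?i + 1 + 1 + 1) mod 3 = ?i mod 3" by presburger
  then have "tau_blocks (?i + 1 + 1 + 1) q = tau_blocks ?i q" by (rule tau_blocks_mod3)
  then show ?thesis by (simp add: xu_braid_def tau_blocks_append tau_power_def)
qed

lemma xu_braid_merge: "xu_braid n j (p @ [a, 0, 0, b] @ q) = xu_braid n j (p @ [a + b] @ q)"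
proof -
  let ?i = "j + int (length p)"
  have b: "tau_power (?i + 1 + 1 + 1) b = tau_power ?i b"
    by (rule tau_power_mod3) presburger
  have q: "tau_blocks (?i + 1 + 1 + 1 + 1) q = tau_blocks (?i + 1) q"
    by (rule tau_blocks_mod3) presburger
  have "xu_braid n j (p @ [a, 0, 0, b] @ q) = delta_pow n @ tau_blocks j p @ tau_power ?i a
      @ tau_power (?i + 1 + 1 + 1) b @ tau_blocks (?i + 1 + 1 + 1 + 1) q"
    by (simp add: xu_braid_def tau_blocks_append tau_power_def)
  also have "\<dots> = xu_braid n j (p @ [a + b] @ q)"
    unfolding b q by (simp add: xu_braid_def tau_blocks_append tau_power_add)
  finally show ?thesis .
qed

text \<open>The relation \<open>\<tau>\<^sub>i \<tau>\<^sub>i\<^sub>+\<^sub>2 = \<delta>\<close> turns a gap into an extra factor \<open>\<delta>\<close>, which is then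
  moved to the front.\<close>

lemma xu_braid_gap:
  assumes "a \<ge> 1" "b \<ge> 1"
  shows "xu_braid n j (p @ [a, 0, b] @ q) \<approx> xu_braid (n + 1) (j + 1) (p @ [a - 1, b - 1] @ q)"
proof -
  let ?i = "j + int (length p)"
  have ea: "tau_power ?i a = tau_power ?i (a - 1) @ tau_word ?i"
    using tau_power_add [of ?i "a - 1" 1] assms by (simp add: tau_power_def)
  have eb: "tau_power (?i + 1 + 1) b = tau_word (?i + 2) @ tau_power (?i + 1 + 1) (b - 1)"
    using tau_power_add [of "?i + 1 + 1" 1 "b - 1"] assms by (simp add: tau_power_def add.assoc)
  let ?X = "tau_blocks j p @ tau_power ?i (a - 1)"
  let ?Y = "tau_power (?i + 1 + 1) (b - 1) @ tau_blocks (?i + 1 + 1 + 1) q"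
  have "xu_braid n j (p @ [a, 0, b] @ q) = delta_pow n @ ?X @ (tau_word ?i @ tau_word (?i + 2)) @ ?Y"
    using ea eb by (simp add: xu_braid_def tau_blocks_append tau_power_def)
  also have "\<dots> \<approx> delta_pow n @ ?X @ delta @ ?Y"
    by (intro braid_eq_append braid_eq.refl tau_word_gap)
  also have "\<dots> = delta_pow n @ (tau_blocks j (p @ [a - 1]) @ delta_pow 1) @ ?Y"
    by (simp add: tau_blocks_append delta_pow_1)
  also have "\<dots> \<approx> delta_pow n @ (delta_pow 1 @ tau_blocks (j + 1) (p @ [a - 1])) @ ?Y"
    by (intro braid_eq_append braid_eq.refl tau_blocks_delta_pow)
  also have "\<dots> = (delta_pow n @ delta_pow 1) @ tau_blocks (j + 1) (p @ [a - 1]) @ ?Y"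
    by simp
  also have "\<dots> \<approx> delta_pow (n + 1) @ tau_blocks (j + 1) (p @ [a - 1]) @ ?Y"
    by (intro braid_eq_append braid_eq.refl delta_pow_add)
  also have "\<dots> = xu_braid (n + 1) (j + 1) (p @ [a - 1, b - 1] @ q)"
    by (simp add: xu_braid_def tau_blocks_append algebra_simps)
  finally show ?thesis .
qed

lemma xu_braid_remove_zero:
  assumes "0 \<in> set us"
  obtains n' j' us' where "xu_braid n j us \<approx> xu_braid n' j' us'" "n \<le> n'"
    "sum_list us' + length us' < sum_list us + length us"
proof (cases "hd us = 0 \<or> last us = 0")
  case True
  have "us \<noteq> []" using assms by auto
  from True show ?thesis
  proof
    assume "hd us = 0"
    then obtain r where us: "us = 0 # r" using \<open>us \<noteq> []\<close> by (cases us) auto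
    show ?thesis
      by (rule that [of n "j + 1" r]) (simp_all add: us xu_braid_Cons_0 braid_eq.refl)
  next
    assume "last us = 0"
    then obtain r where us: "us = r @ [0]" using \<open>us \<noteq> []\<close> by (cases us rule: rev_cases) auto
    show ?thesis
      by (rule that [of n j r]) (simp_all add: us xu_braid_snoc_0 braid_eq.refl)
  qed
next
  case False
  obtain p q where pq: "us = p @ 0 # q" "0 \<notin> set p"
    using split_list_first [OF assms] by blast
  then obtain p' a where p: "p = p' @ [a]" and "a \<ge> 1"
    using False by (cases p rule: rev_cases) auto
  obtain b q' where q: "q = b # q'"
    using False pq by (cases q) auto
  show ?thesis
  proof (cases "b \<ge> 1")
    case True
    have us: "us = p' @ [a, 0, b] @ q'" using pq p q by simp
    show ?thesis
      by (rule that [OF xu_braid_gap [OF \<open>a \<ge> 1\<close> True, of n j p' q', folded us]])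
        (use True \<open>a \<ge> 1\<close> in \<open>simp_all add: us\<close>)
  next
    case False
    then obtain c q'' where q': "q' = c # q''" and b: "b = 0"
      using \<open>\<not> (hd us = 0 \<or> last us = 0)\<close> pq q by (cases q') auto
    show ?thesis
    proof (cases "c \<ge> 1")
      case True
      have us: "us = p' @ [a, 0, 0, c] @ q''" using pq p q q' b by simp
      show ?thesis
        by (rule that [of n j "p' @ [a + c] @ q''"])
          (simp_all only: us xu_braid_merge braid_eq.refl order.refl, simp)
    next
      case False
      have us: "us = (p' @ [a]) @ [0, 0, 0] @ q''" using pq p q q' b False by simp
      show ?thesis
        by (rule that [of n j "(p' @ [a]) @ q''"])
          (simp_all only: us xu_braid_remove_three_0 braid_eq.refl order.refl, simp)
    qed
  qed
qed

lemma xu_braid_remove_zeros: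
  obtains n' j' us' where "xu_braid n j us \<approx> xu_braid n' j' us'" "n \<le> n'" "\<forall>u\<in>set us'. u \<ge> 1"
proof (induction "sum_list us + length us" arbitrary: n j us thesis rule: less_induct)
  case less
  show ?case
  proof (cases "0 \<in> set us")
    case True
    obtain n1 j1 us1 where step: "xu_braid n j us \<approx> xu_braid n1 j1 us1" "n \<le> n1"
        "sum_list us1 + length us1 < sum_list us + length us"
      using xu_braid_remove_zero [OF True] by blast
    obtain n' j' us' where rest: "xu_braid n1 j1 us1 \<approx> xu_braid n' j' us'" "n1 \<le> n'"
        "\<forall>u\<in>set us'. u \<ge> 1"
      using less.hyps [OF step(3)] by blast
    show ?thesis
      by (rule less.prems [OF braid_eq.trans [OF step(1) rest(1)]]) (use step(2) rest in auto)
  next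
    case False
    then have "\<forall>u\<in>set us. u \<ge> 1"
      by (metis One_nat_def Suc_leI neq0_conv)
    then show ?thesis
      by (rule less.prems [OF braid_eq.refl order.refl])
  qed
qed

lemma xu_braid_conj_shift: "braid_conj (xu_braid n j us) (xu_braid n (j + 1) us)"
proof -
  have "inv_word delta @ xu_braid n j us @ inv_word (inv_word delta)
      = (delta_pow (-1) @ delta_pow n) @ (tau_blocks j us @ delta_pow 1)"
    by (simp add: xu_braid_def delta_pow_minus_1 delta_pow_1)
  also have "\<dots> \<approx> delta_pow (-1 + n) @ (delta_pow 1 @ tau_blocks (j + 1) us)"
    by (intro braid_eq_append delta_pow_add tau_blocks_delta_pow)
  also have "\<dots> \<approx> (delta_pow n @ delta_pow (-1)) @ (delta_pow 1 @ tau_blocks (j + 1) us)"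
    using braid_eq_append [OF braid_eq.sym [OF delta_pow_add [of n "-1"]] braid_eq.refl]
    by (simp add: add.commute)
  also have "\<dots> = delta_pow n @ (delta_pow (-1) @ delta_pow 1) @ tau_blocks (j + 1) us"
    by simp
  also have "\<dots> \<approx> delta_pow n @ delta_pow (-1 + 1) @ tau_blocks (j + 1) us"
    by (intro braid_eq_append braid_eq.refl delta_pow_add)
  also have "\<dots> = xu_braid n (j + 1) us"
    by (simp add: xu_braid_def)
  finally show ?thesis
    unfolding braid_conj_def by blast
qed

lemma xu_braid_conj_start: "braid_conj (xu_braid n j us) (xu_braid n 1 us)"
proof -
  have shift: "braid_conj (xu_braid n j us) (xu_braid n (j + int m) us)" for m
  proof (induction m)
    case (Suc m)
    then show ?case
      using braid_conj_trans [OF Suc.IH xu_braid_conj_shift [of n "j + int m" us]]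
      by (simp add: algebra_simps)
  qed (simp add: braid_conj_refl)
  have "braid_conj (xu_braid n j us) (xu_braid n (j + (1 - j) mod 3) us)"
    using shift [of "nat ((1 - j) mod 3)"] by simp
  moreover have "(j + (1 - j) mod 3) mod 3 = 1 mod 3" by presburger
  ultimately show ?thesis using xu_braid_mod3 by metis
qed

text \<open>Conjugating by the last block moves it to the front, past \<open>\<delta>\<^sup>n\<close>; padding with
  \<open>L\<close> zero exponents realigns the indices.\<close>

lemma xu_braid_conj_rotate:
  assumes "(int (length us) + n + 1 + int L) mod 3 = 0"
  shows "braid_conj (xu_braid n j (us @ [u]))
           (xu_braid n (j + int (length us) + n) (u # replicate L 0 @ us))"
proof -
  let ?i = "j + int (length us)"
  let ?g = "tau_power ?i u"
  have "?g @ xu_braid n j (us @ [u]) @ inv_word ?g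
      = (?g @ delta_pow n) @ tau_blocks j us @ (?g @ inv_word ?g)"
    by (simp add: xu_braid_def tau_blocks_append)
  also have "\<dots> \<approx> (delta_pow n @ tau_power (?i + n) u) @ tau_blocks j us @ []"
    by (intro braid_eq_append braid_eq.refl tau_power_delta_pow braid_eq_inv_right)
  also have "\<dots> = xu_braid n (?i + n) (u # replicate L 0 @ us)"
  proof -
    have "(?i + n + 1 + int L) mod 3 = j mod 3" using assms by presburger
    then have "tau_blocks (?i + n + 1 + int L) us = tau_blocks j us" by (rule tau_blocks_mod3)
    then show ?thesis by (simp add: xu_braid_def tau_blocks_replicate_0)
  qed
  finally show ?thesis
    unfolding braid_conj_def by blast
qed

lemma xu_braid_conj_rotate1:
  assumes "(n + int (length (x # xs))) mod 3 = 0"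
  shows "braid_conj (xu_braid n 1 (x # xs)) (xu_braid n 1 (xs @ [x]))"
proof -
  have "(int (length xs) + n + 1 + int 0) mod 3 = 0" using assms by (simp add: algebra_simps)
  from xu_braid_conj_rotate [OF this, of 1 x]
  have "braid_conj (xu_braid n 1 (xs @ [x])) (xu_braid n (1 + int (length xs) + n) (x # xs))"
    by simp
  then show ?thesis
    using braid_conj_sym braid_conj_trans xu_braid_conj_start by blast
qed

lemma xu_braid_conj_rotate_any:
  assumes "(n + int (length us)) mod 3 = 0"
  shows "braid_conj (xu_braid n 1 us) (xu_braid n 1 (rotate k us))"
proof (induction k)
  case (Suc k)
  have "braid_conj (xu_braid n 1 (rotate k us)) (xu_braid n 1 (rotate1 (rotate k us)))"
  proof (cases "rotate k us")
    case (Cons x xs)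
    then have "(n + int (length (x # xs))) mod 3 = 0"
      using assms by (metis length_rotate)
    from xu_braid_conj_rotate1 [OF this] show ?thesis using Cons by simp
  qed (simp add: braid_conj_refl)
  then show ?case
    using braid_conj_trans [OF Suc.IH] by simp
qed (simp add: braid_conj_refl)

lemma xu_eval_append: "xu_eval (u @ v) = xu_eval u @ xu_eval v"
  by (simp add: xu_eval_def)

lemma xu_val_tau: "xu_val (tau (Suc m)) = tau_word (1 + int m)"
proof -
  have "int (Suc m mod 3) = (1 + int m) mod 3" by (simp add: zmod_int)
  then show ?thesis by (auto simp: tau_def tau_word_def)
qed

lemma xu_eval_tau_blocks:
  "xu_eval (concat (map (\<lambda>i. replicate (us ! i) (tau (Suc (i + m)), True)) [0..<length us]))
     = tau_blocks (1 + int m) us"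
proof (induction us arbitrary: m)
  case (Cons u us)
  let ?F = "\<lambda>i. replicate ((u # us) ! i) (tau (Suc (i + m)), True)"
  have "map ?F [0..<Suc (length us)] = ?F 0 # map (?F \<circ> Suc) [0..<length us]"
    by (simp add: upt_conv_Cons map_Suc_upt [symmetric] del: upt_Suc)
  moreover have "?F \<circ> Suc = (\<lambda>i. replicate (us ! i) (tau (Suc (i + Suc m)), True))"
    by (rule ext) simp
  ultimately show ?case
    using Cons.IH [of "Suc m"]
    by (simp add: xu_eval_append xu_eval_def map_replicate tau_power_def xu_val_tau algebra_simps)
qed (simp add: xu_eval_def)

lemma xu_eval_delta_pow: "xu_eval (replicate (nat \<bar>n\<bar>) (Ld, n \<ge> 0)) = delta_pow n"
  by (simp add: xu_eval_def delta_pow_def delta_def map_replicate)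

lemma xu_eval_xu_word: "xu_eval (xu_word n us) = xu_braid n 1 us"
  using xu_eval_tau_blocks [of us 0]
  by (simp add: xu_word_def xu_eval_append xu_eval_delta_pow xu_braid_def)

section \<open>The image of \<open>xu_braid\<close> in the modular group\<close>

definition s_pow :: "int \<Rightarrow> mletter list" where
  "s_pow n = (if n mod 3 = 0 then [] else if n mod 3 = 1 then [S] else [S'])"

lemma s_pow_mod3: "a mod 3 = b mod 3 \<Longrightarrow> s_pow a = s_pow b"
  by (simp add: s_pow_def)

lemma s_pow_0 [simp]: "s_pow 0 = []"
  by (simp add: s_pow_def)

lemma s_pow_minus_1: "s_pow (-1) = [S']"
  by (simp add: s_pow_def)

lemma reduced_s_pow: "reduced (s_pow n)"
  by (simp add: s_pow_def)

lemma reduce_s_pow_append: "reduce (s_pow a @ s_pow b) = s_pow (a + b)"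
proof -
  have residues: "reduce (s_pow x @ s_pow y) = s_pow (x + y)"
    if "x \<in> {0, 1, 2}" "y \<in> {0, 1, 2}" for x y :: int
    using that by (auto simp: s_pow_def reduce_def)
  have "s_pow a = s_pow (a mod 3)" "s_pow b = s_pow (b mod 3)"
    by (rule s_pow_mod3, simp)+
  moreover have "s_pow (a + b) = s_pow (a mod 3 + b mod 3)"
    by (rule s_pow_mod3) presburger
  moreover have "x mod 3 \<in> {0, 1, 2}" for x :: int
    by (cases x rule: mod3_cases) auto
  ultimately show ?thesis
    using residues by presburger
qed

lemma meq_s_pow_append: "meq (s_pow a @ s_pow b) (s_pow (a + b))"
  unfolding meq_def reduce_s_pow_append using reduce_reduced [OF reduced_s_pow] by simp

lemma inverse_word_s_pow: "inverse_word (s_pow t) = s_pow (- t)"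
proof (cases t rule: mod3_cases)
  case 1
  then have "(- t) mod 3 = 0" by presburger
  then show ?thesis using 1 by (simp add: s_pow_def inverse_word_def)
next
  case 2
  then have "(- t) mod 3 = 2" by presburger
  then show ?thesis using 2 by (simp add: s_pow_def inverse_word_def)
next
  case 3
  then have "(- t) mod 3 = 1" by presburger
  then show ?thesis using 3 by (simp add: s_pow_def inverse_word_def)
qed

lemma reduce_modular_image_delta_pow: "reduce (modular_image (delta_pow n)) = s_pow n"
proof (induction n rule: int_induct [where k = 0])
  case (step1 i)
  have "reduce (modular_image (delta_pow (i + 1)))
      = reduce (modular_image (delta_pow i) @ modular_image delta)"
    using step1 by (simp add: delta_pow_succ_nonneg)
  also have "\<dots> = reduce (reduce (modular_image (delta_pow i)) @ reduce (modular_image delta))"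
    by (rule reduce_append)
  also have "reduce (modular_image delta) = s_pow 1"
    by (simp add: delta_def modular_image_def reduce_def s_pow_def)
  finally show ?case
    using step1 reduce_s_pow_append by simp
next
  case (step2 i)
  show ?case
  proof (cases "i - 1 < 0")
    case True
    have "reduce (modular_image (delta_pow (i - 1)))
        = reduce (modular_image (delta_pow i) @ modular_image (inv_word delta))"
      using delta_pow_neg [OF True] by simp
    also have "\<dots> = reduce (reduce (modular_image (delta_pow i)) @ reduce (modular_image (inv_word delta)))"
      by (rule reduce_append)
    also have "reduce (modular_image (inv_word delta)) = s_pow (-1)"
      by (simp add: delta_def modular_image_def reduce_def s_pow_def inv_word_def)
    finally show ?thesis
      using step2 reduce_s_pow_append [of i "-1"] by simp
  qed (use step2 in simp)
qed (simp add: reduce_def)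

definition rs_pow :: "nat \<Rightarrow> mletter list" where
  "rs_pow u = concat (replicate u [R, S'])"

lemma rs_pow_0 [simp]: "rs_pow 0 = []"
  by (simp add: rs_pow_def)

lemma rs_pow_Suc: "rs_pow (Suc k) = [R, S'] @ rs_pow k"
  by (simp add: rs_pow_def)

lemma rs_pow_Suc': "rs_pow (Suc k) = rs_pow k @ [R, S']"
  by (simp add: rs_pow_def replicate_append_same [symmetric])

lemma length_rs_pow [simp]: "length (rs_pow k) = 2 * k"
  by (induction k) (auto simp: rs_pow_Suc)

lemma count_rs_pow [simp]: "count_list (rs_pow k) R = k" "count_list (rs_pow k) S = 0"
  by (induction k) (auto simp: rs_pow_Suc)

lemma S_notin_rs_pow: "S \<notin> set (rs_pow k)"
  by (induction k) (auto simp: rs_pow_Suc)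

lemma meq_tau_word: "meq (modular_image (tau_word i)) (s_pow (1 - i) @ [R, S'] @ s_pow (i - 1))"
proof (cases i rule: mod3_cases)
  case 1
  then have "(1 - i) mod 3 = 1" "(i - 1) mod 3 = 2" by presburger+
  then show ?thesis
    using 1 by (simp add: tau_word_def s_pow_def modular_image_def meq_def reduce_def)
next
  case 2
  then have "(1 - i) mod 3 = 0" "(i - 1) mod 3 = 0" by presburger+
  then show ?thesis
    using 2 by (simp add: tau_word_def s_pow_def modular_image_def)
next
  case 3
  then have "(1 - i) mod 3 = 2" "(i - 1) mod 3 = 1" by presburger+
  then show ?thesis
    using 3 by (simp add: tau_word_def s_pow_def modular_image_def meq_def reduce_def)
qed

lemma meq_tau_power:
  "meq (modular_image (tau_power i u)) (s_pow (1 - i) @ rs_pow u @ s_pow (i - 1))"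
proof (induction u)
  case 0
  show ?case
    using meq_sym [OF meq_s_pow_append [of "1 - i" "i - 1"]] by (simp add: tau_power_def)
next
  case (Suc u)
  have "modular_image (tau_power i (Suc u)) = modular_image (tau_word i) @ modular_image (tau_power i u)"
    by (simp add: tau_power_def)
  also have "meq \<dots> ((s_pow (1 - i) @ [R, S'] @ s_pow (i - 1)) @ (s_pow (1 - i) @ rs_pow u @ s_pow (i - 1)))"
    by (intro meq_append meq_tau_word Suc.IH)
  also have "\<dots> = (s_pow (1 - i) @ [R, S']) @ (s_pow (i - 1) @ s_pow (1 - i)) @ (rs_pow u @ s_pow (i - 1))"
    by simp
  also have "meq \<dots> ((s_pow (1 - i) @ [R, S']) @ [] @ (rs_pow u @ s_pow (i - 1)))"
    using meq_s_pow_append [of "i - 1" "1 - i"] by (intro meq_append meq_refl) simp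
  finally show ?case by (simp add: rs_pow_def)
qed

definition rs_blocks :: "nat list \<Rightarrow> mletter list" where
  "rs_blocks us = concat (map (\<lambda>u. rs_pow u @ [S']) us)"

lemma meq_tau_blocks:
  "meq (modular_image (tau_blocks j us)) (s_pow (1 - j) @ rs_blocks us @ s_pow (j - 1 + int (length us)))"
proof (induction us arbitrary: j)
  case Nil
  show ?case
    using meq_sym [OF meq_s_pow_append [of "1 - j" "j - 1"]] by (simp add: rs_blocks_def)
next
  case (Cons u us)
  have "modular_image (tau_blocks j (u # us))
      = modular_image (tau_power j u) @ modular_image (tau_blocks (j + 1) us)"
    by simp
  also have "meq \<dots> ((s_pow (1 - j) @ rs_pow u @ s_pow (j - 1)) @
      (s_pow (1 - (j + 1)) @ rs_blocks us @ s_pow (j + 1 - 1 + int (length us))))"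
    by (intro meq_append meq_tau_power Cons.IH)
  also have "\<dots> = (s_pow (1 - j) @ rs_pow u) @ (s_pow (j - 1) @ s_pow (1 - (j + 1))) @
      (rs_blocks us @ s_pow (j + 1 - 1 + int (length us)))"
    by simp
  also have "meq \<dots> ((s_pow (1 - j) @ rs_pow u) @ s_pow (-1) @
      (rs_blocks us @ s_pow (j + 1 - 1 + int (length us))))"
    using meq_s_pow_append [of "j - 1" "1 - (j + 1)"] by (intro meq_append meq_refl) simp
  finally show ?case
    by (simp add: rs_blocks_def s_pow_minus_1 algebra_simps)
qed

lemma meq_xu_braid:
  "meq (modular_image (xu_braid n 1 us)) (s_pow n @ rs_blocks us @ s_pow (int (length us)))"
proof -
  have "modular_image (xu_braid n 1 us) = modular_image (delta_pow n) @ modular_image (tau_blocks 1 us)"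
    by (simp add: xu_braid_def)
  also have "meq \<dots> (s_pow n @ (s_pow (1 - 1) @ rs_blocks us @ s_pow (1 - 1 + int (length us))))"
    using reduce_modular_image_delta_pow [of n] reduce_reduced [OF reduced_s_pow]
    by (intro meq_append meq_tau_blocks) (simp add: meq_def)
  finally show ?thesis by simp
qed

text \<open>For positive exponents the image is, up to conjugation by a power of \<open>s\<close>, the word
  \<open>s\<^bsup>n+t\<^esup> \<cdot> cword us\<close>, where each exponent \<open>u\<close> contributes \<open>(r s\<^sup>-\<^sup>1)\<^bsup>u-1\<^esup> r s\<close>.\<close>

definition cblock :: "nat \<Rightarrow> mletter list" where
  "cblock u = rs_pow (u - 1) @ [R, S]"

definition cword :: "nat list \<Rightarrow> mletter list" where
  "cword us = concat (map cblock us)"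

lemma cword_Nil [simp]: "cword [] = []"
  by (simp add: cword_def)

lemma cword_Cons: "cword (u # us) = cblock u @ cword us"
  by (simp add: cword_def)

lemma cword_append: "cword (us @ vs) = cword us @ cword vs"
  by (simp add: cword_def)

lemma cword_snoc: "cword (us @ [u]) = (cword us @ rs_pow (u - 1)) @ [R, S]"
  by (simp add: cword_def cblock_def)

lemma cblock_ne: "cblock u \<noteq> []"
  by (simp add: cblock_def)

lemma last_cblock: "last (cblock u) = S"
  by (simp add: cblock_def)

lemma hd_cblock: "hd (cblock u) = R"
  by (cases "u - 1") (auto simp: cblock_def rs_pow_Suc)

lemma cword_eq_Nil_iff [simp]: "cword us = [] \<longleftrightarrow> us = []"
  by (cases us) (auto simp: cword_Cons cblock_ne)

lemma hd_cword: "us \<noteq> [] \<Longrightarrow> hd (cword us) = R"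
  by (cases us) (auto simp: cword_Cons hd_cblock cblock_ne)

lemma reduced_cblock: "reduced (cblock u)"
  unfolding cblock_def
proof (induction "u - 1" arbitrary: u)
  case (Suc k)
  then have "reduced (rs_pow k @ [R, S])" by (metis diff_Suc_1)
  moreover have "hd (rs_pow k @ [R, S]) = R"
    by (cases k) (auto simp: rs_pow_Suc)
  ultimately show ?case
    using Suc.hyps(2) [symmetric] by (simp add: rs_pow_Suc reduced_ConsI)
qed simp

lemma reduced_cword: "reduced (cword us)"
proof (induction us)
  case (Cons u us)
  show ?case
    unfolding cword_Cons
    by (rule reduced_append) (auto simp: reduced_cblock Cons.IH last_cblock hd_cword)
qed simp

lemma count_cword_R: "\<forall>u\<in>set us. u \<ge> 1 \<Longrightarrow> count_list (cword us) R = sum_list us"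
  by (induction us) (auto simp: cword_Cons cblock_def)

lemma count_cword_S: "count_list (cword us) S = length us"
  by (induction us) (auto simp: cword_Cons cblock_def)

lemma length_cblock: "u \<ge> 1 \<Longrightarrow> length (cblock u) = 2 * u"
  by (simp add: cblock_def)

lemma meq_rs_blocks_cword: "\<forall>u\<in>set us. u \<ge> 1 \<Longrightarrow> meq (rs_blocks us) (cword us)"
proof (induction us)
  case (Cons u us)
  then obtain k where u: "u = Suc k" by (cases u) auto
  have "rs_pow u @ [S'] = rs_pow k @ [R, S', S']"
    by (simp add: u rs_pow_Suc')
  also have "meq \<dots> (rs_pow k @ [R, S])"
    by (intro meq_append meq_refl) (simp add: meq_def reduce_def)
  finally have "meq (rs_pow u @ [S']) (cblock u)"
    by (simp add: cblock_def u)
  moreover have "meq (rs_blocks us) (cword us)"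
    using Cons by simp
  ultimately have "meq ((rs_pow u @ [S']) @ rs_blocks us) (cblock u @ cword us)"
    by (rule meq_append)
  then show ?case
    by (simp add: rs_blocks_def cword_Cons)
qed (simp add: rs_blocks_def)

lemma rotation_cyc_class_xu_braid:
  assumes "\<forall>u\<in>set us. u \<ge> 1"
  shows "rotation_of (cyc_class (xu_braid n 1 us))
    (cyc_reduce (reduce (s_pow (n + int (length us)) @ cword us)))"
proof -
  let ?t = "int (length us)"
  let ?W = "reduce (modular_image (xu_braid n 1 us))"
  have "s_pow ?t @ ?W @ inverse_word (s_pow ?t) = s_pow ?t @ ?W @ s_pow (- ?t)"
    by (simp add: inverse_word_s_pow)
  also have "meq \<dots> (s_pow ?t @ (s_pow n @ rs_blocks us @ s_pow ?t) @ s_pow (- ?t))"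
    using meq_trans [OF meq_sym [OF meq_reduce] meq_xu_braid]
    by (intro meq_append meq_refl)
  also have "\<dots> = (s_pow ?t @ s_pow n) @ rs_blocks us @ (s_pow ?t @ s_pow (- ?t))"
    by simp
  also have "meq \<dots> (s_pow (?t + n) @ cword us @ s_pow (?t + - ?t))"
    by (intro meq_append meq_s_pow_append meq_rs_blocks_cword assms)
  finally have "reduce (s_pow ?t @ ?W @ inverse_word (s_pow ?t)) = reduce (s_pow (n + ?t) @ cword us)"
    by (simp add: meq_def add.commute)
  moreover have "rotation_of (cyc_reduce ?W) (cyc_reduce (reduce (s_pow ?t @ ?W @ inverse_word (s_pow ?t))))"
    by (rule rotation_of_sym [OF cyc_reduce_conj [OF reduced_reduce]])
  ultimately show ?thesis
    unfolding cyc_class_def by simp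
qed

lemma cyc_reduce_cword_mod0:
  assumes "us \<noteq> []" "(n + int (length us)) mod 3 = 0"
  shows "cyc_reduce (reduce (s_pow (n + int (length us)) @ cword us)) = cword us"
proof -
  obtain p u where us: "us = p @ [u]"
    using assms(1) by (cases us rule: rev_cases) auto
  have "2 \<le> length (cword us)" "last (cword us) = S"
    by (simp_all add: us cword_snoc)
  then have "cyc_reduce (cword us) = cword us"
    using hd_cword [OF assms(1)] by (intro cyc_reduce_stop) simp_all
  then show ?thesis
    using assms(2) reduce_reduced [OF reduced_cword] by (simp add: s_pow_def)
qed

lemma cyc_reduce_cword_mod1:
  assumes "us \<noteq> []" "(n + int (length us)) mod 3 = 1"
  obtains Y where "cword us = Y @ [R, S]"
    "cyc_reduce (reduce (s_pow (n + int (length us)) @ cword us)) = S' # Y @ [R]"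
proof -
  obtain p u where us: "us = p @ [u]"
    using assms(1) by (cases us rule: rev_cases) auto
  define Y where "Y = cword p @ rs_pow (u - 1)"
  have cw: "cword us = Y @ [R, S]" by (simp add: Y_def us cword_snoc)
  have "reduced (S # cword us)"
    using reduced_cword [of us] hd_cword [OF assms(1)] cw by (intro reduced_ConsI) auto
  then have "cyc_reduce (reduce (s_pow (n + int (length us)) @ cword us)) = S' # Y @ [R]"
    using assms(2) reduce_reduced by (simp add: s_pow_def cw cyc_reduce_step cyc_reduce_stop butlast_append)
  with cw show ?thesis by (rule that)
qed

lemma cyc_reduce_cword_mod2:
  assumes "us \<noteq> []" "(n + int (length us)) mod 3 = 2"
  obtains Y where "cword us = Y @ [R, S]"
    "cyc_reduce (reduce (s_pow (n + int (length us)) @ cword us)) = cyc_reduce (Y @ [R])"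
proof -
  obtain p u where us: "us = p @ [u]"
    using assms(1) by (cases us rule: rev_cases) auto
  define Y where "Y = cword p @ rs_pow (u - 1)"
  have cw: "cword us = Y @ [R, S]" by (simp add: Y_def us cword_snoc)
  have "reduced (S' # cword us)"
    using reduced_cword [of us] hd_cword [OF assms(1)] cw by (intro reduced_ConsI) auto
  then have "cyc_reduce (reduce (s_pow (n + int (length us)) @ cword us)) = cyc_reduce (Y @ [R])"
    using assms(2) reduce_reduced by (simp add: s_pow_def cw cyc_reduce_step butlast_append)
  with cw show ?thesis by (rule that)
qed

section \<open>Conjugacy invariants of \<open>xu_braid\<close>\<close>

lemma hd_prefix_cword:
  assumes "cword us = Y @ [R, S]" "Y \<noteq> []"
  shows "hd Y = R"
proof -
  have "us \<noteq> []" using assms(1) by auto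
  then show ?thesis using hd_cword [of us] assms by simp
qed

lemma count_R_cyc_class_eq:
  assumes pos: "\<forall>u\<in>set us. u \<ge> 1"
    and cond: "us = [] \<or> (n + int (length us)) mod 3 \<noteq> 2 \<or> sum_list us = 1"
  shows "count_list (cyc_class (xu_braid n 1 us)) R = sum_list us"
proof -
  let ?m = "n + int (length us)"
  have rot: "count_list (cyc_class (xu_braid n 1 us)) R
      = count_list (cyc_reduce (reduce (s_pow ?m @ cword us))) R"
    using rotation_of_count_list [OF rotation_cyc_class_xu_braid [OF pos]] .
  show ?thesis
  proof (cases "us = []")
    case True
    have "count_list (reduce (s_pow n)) R = 0"
      using reduce_reduced [OF reduced_s_pow] by (simp add: s_pow_def)
    then show ?thesis
      using rot count_cyc_reduce_R [of "reduce (s_pow n)"] True by simp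
  next
    case ne: False
    show ?thesis
    proof (cases ?m rule: mod3_cases)
      case 1
      then show ?thesis
        using rot cyc_reduce_cword_mod0 [OF ne 1] count_cword_R [OF pos] by simp
    next
      case 2
      then obtain Y where "cword us = Y @ [R, S]"
          "cyc_reduce (reduce (s_pow ?m @ cword us)) = S' # Y @ [R]"
        using cyc_reduce_cword_mod1 [OF ne] by blast
      then show ?thesis
        using rot count_cword_R [OF pos] by simp
    next
      case 3
      then obtain Y where Y: "cword us = Y @ [R, S]"
          "cyc_reduce (reduce (s_pow ?m @ cword us)) = cyc_reduce (Y @ [R])"
        using cyc_reduce_cword_mod2 [OF ne] by blast
      have "count_list Y R = 0"
        using count_cword_R [OF pos] Y(1) cond ne 3 by simp
      then have "Y = []"
        using hd_prefix_cword [OF Y(1)] by (cases Y) auto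
      then show ?thesis
        using rot Y count_cword_R [OF pos] by simp
    qed
  qed
qed

lemma count_R_cyc_class_less:
  assumes pos: "\<forall>u\<in>set us. u \<ge> 1"
    and "us \<noteq> []" "(n + int (length us)) mod 3 = 2" "sum_list us \<noteq> 1"
  shows "count_list (cyc_class (xu_braid n 1 us)) R + 2 \<le> sum_list us"
proof -
  let ?m = "n + int (length us)"
  obtain Y where Y: "cword us = Y @ [R, S]"
      "cyc_reduce (reduce (s_pow ?m @ cword us)) = cyc_reduce (Y @ [R])"
    using cyc_reduce_cword_mod2 [OF assms(2,3)] by blast
  have count_Y: "count_list Y R + 1 = sum_list us"
    using count_cword_R [OF pos] Y(1) by simp
  then have "Y \<noteq> []" using assms(4) by auto
  then obtain M where M: "Y = R # M"
    using hd_prefix_cword [OF Y(1)] by (cases Y) auto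
  have "count_list (cyc_class (xu_braid n 1 us)) R = count_list (cyc_reduce (Y @ [R])) R"
    using rotation_of_count_list [OF rotation_cyc_class_xu_braid [OF pos]] Y(2) by simp
  also have "\<dots> = count_list (cyc_reduce M) R"
    by (simp add: M cyc_reduce_step)
  also have "\<dots> \<le> count_list M R"
    by (rule count_cyc_reduce_R)
  finally show ?thesis
    using count_Y M by simp
qed

lemma count_R_cyc_class_le:
  assumes "\<forall>u\<in>set us. u \<ge> 1"
  shows "count_list (cyc_class (xu_braid n 1 us)) R \<le> sum_list us"
  using count_R_cyc_class_eq [OF assms] count_R_cyc_class_less [OF assms]
  by (metis add_leD1 eq_imp_le)

lemma count_S_cyc_class_mod0:
  assumes "us \<noteq> []" "(n + int (length us)) mod 3 = 0" "\<forall>u\<in>set us. u \<ge> 1"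
  shows "count_list (cyc_class (xu_braid n 1 us)) S = length us"
  using rotation_of_count_list [OF rotation_cyc_class_xu_braid [OF assms(3)]]
    cyc_reduce_cword_mod0 [OF assms(1,2)] count_cword_S
  by simp

lemma count_S_cyc_class_mod1:
  assumes "us \<noteq> []" "(n + int (length us)) mod 3 = 1" "\<forall>u\<in>set us. u \<ge> 1"
  shows "count_list (cyc_class (xu_braid n 1 us)) S = length us - 1"
proof -
  obtain Y where "cword us = Y @ [R, S]"
      "cyc_reduce (reduce (s_pow (n + int (length us)) @ cword us)) = S' # Y @ [R]"
    using cyc_reduce_cword_mod1 [OF assms(1,2)] by blast
  then show ?thesis
    using rotation_of_count_list [OF rotation_cyc_class_xu_braid [OF assms(3)]]
      count_cword_S [of us] by simp
qed

lemma cword_split: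
  assumes "\<forall>u\<in>set us. u \<ge> 1" "cword us = X @ Y" "X \<noteq> [] \<Longrightarrow> last X = S"
  shows "\<exists>j. X = cword (take j us) \<and> Y = cword (drop j us)"
  using assms
proof (induction us arbitrary: X)
  case (Cons u us)
  show ?case
  proof (cases "length X < length (cblock u)")
    case True
    have "X = take (length X) (cblock u)"
      using Cons.prems(2) True by (simp add: cword_Cons append_eq_append_conv_if)
    also have "\<dots> = take (length X) (butlast (cblock u))"
      using True by (simp add: take_butlast)
    finally have "set X \<subseteq> set (rs_pow (u - 1) @ [R])"
      by (metis butlast_append cblock_def append_Nil butlast.simps(2) list.distinct(1) set_take_subset)
    then have "S \<notin> set X"
      using S_notin_rs_pow by auto
    then have "X = []"
      using Cons.prems(3) last_in_set by fastforce
    then show ?thesis using Cons.prems(2) by (intro exI [of _ 0]) simp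
  next
    case False
    define X' where "X' = drop (length (cblock u)) X"
    have "cblock u = take (length (cblock u)) X" and us: "cword us = X' @ Y"
      using Cons.prems(2) False by (auto simp: X'_def cword_Cons append_eq_append_conv_if)
    then have X: "X = cblock u @ X'"
      unfolding X'_def by (metis append_take_drop_id)
    note us
    moreover have "X' \<noteq> [] \<Longrightarrow> last X' = S"
      using Cons.prems(3) X by simp
    ultimately obtain j where "X' = cword (take j us)" "Y = cword (drop j us)"
      using Cons.IH Cons.prems(1) by auto
    then show ?thesis
      using X by (intro exI [of _ "Suc j"]) (simp add: cword_Cons)
  qed
qed simp

lemma cword_inj:
  assumes "\<forall>u\<in>set us. u \<ge> 1" "\<forall>v\<in>set vs. v \<ge> 1" "cword us = cword vs"
  shows "us = vs"
  using assms
proof (induction vs arbitrary: us)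
  case (Cons v vs)
  obtain j where j: "cblock v = cword (take j us)" "cword vs = cword (drop j us)"
    using cword_split [of us "cblock v" "cword vs"] Cons.prems by (auto simp: cword_Cons last_cblock)
  have "count_list (cblock v) S = 1"
    by (simp add: cblock_def)
  then have "length (take j us) = 1"
    using count_cword_S [of "take j us"] j(1) by simp
  then obtain w where w: "take j us = [w]" by (cases "take j us") auto
  moreover have "w \<ge> 1"
    using w Cons.prems(1) by (metis in_set_takeD list.set_intros(1))
  ultimately have "w = v"
    using j(1) length_cblock [of w] length_cblock [of v] Cons.prems(2) by (simp add: cword_Cons)
  moreover have "drop j us = vs"
    using Cons.IH [of "drop j us"] Cons.prems(1,2) j(2) by (auto dest: in_set_dropD)
  ultimately show ?case
    using w by (metis append_take_drop_id append_Cons append_Nil)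
qed simp

lemma rotation_of_cword:
  assumes pos: "\<forall>u\<in>set us. u \<ge> 1" "\<forall>v\<in>set vs. v \<ge> 1"
    and rot: "rotation_of (cword vs) (cword us)"
  shows "\<exists>k. vs = rotate k us"
proof -
  obtain k where k: "cword vs = rotate k (cword us)"
    using rot by (auto simp: rotation_of_def)
  let ?m = "k mod length (cword us)"
  have split: "cword us = take ?m (cword us) @ drop ?m (cword us)"
    by simp
  have "take ?m (cword us) \<noteq> [] \<Longrightarrow> last (take ?m (cword us)) = S"
  proof -
    assume ne: "take ?m (cword us) \<noteq> []"
    then have "vs \<noteq> []" using k by (auto simp: rotate_drop_take)
    then have "last (cword vs) = S"
      by (cases vs rule: rev_cases) (auto simp: cword_snoc)
    then show ?thesis
      using k ne by (simp add: rotate_drop_take)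
  qed
  then obtain j where j: "take ?m (cword us) = cword (take j us)"
      "drop ?m (cword us) = cword (drop j us)"
    using cword_split [OF pos(1) split] by blast
  have "cword vs = cword (drop j us @ take j us)"
    using k j by (simp add: rotate_drop_take cword_append)
  moreover have "\<forall>u\<in>set (drop j us @ take j us). u \<ge> 1"
    using pos(1) by (auto dest: in_set_dropD in_set_takeD)
  ultimately have vs: "vs = drop j us @ take j us"
    using cword_inj [OF pos(2)] by metis
  show ?thesis
  proof (cases "j < length us")
    case True
    then show ?thesis using vs by (intro exI [of _ j]) (simp add: rotate_drop_take)
  next
    case False
    then show ?thesis using vs by (intro exI [of _ 0]) simp
  qed
qed

lemma exp_sum_tau_word: "exp_sum (tau_word i) = 1"
  by (simp add: tau_word_def exp_sum_def)

lemma exp_sum_xu_braid: "exp_sum (xu_braid n 1 us) = 2 * n + int (sum_list us)"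
proof -
  have "exp_sum (delta_pow n) = 2 * n"
    by (simp add: delta_pow_def delta_def exp_sum_concat_replicate exp_sum_inv_word)
      (simp add: exp_sum_def)
  moreover have "exp_sum (tau_blocks j us) = int (sum_list us)" for j
    by (induction us arbitrary: j)
      (simp_all add: tau_power_def exp_sum_concat_replicate exp_sum_tau_word)
  ultimately show ?thesis
    by (simp add: xu_braid_def)
qed

lemma xu_braid_conj_delta_le:
  assumes pos: "\<forall>u\<in>set us. u \<ge> 1" "\<forall>u\<in>set us'. u \<ge> 1"
    and conj: "braid_conj (xu_braid n 1 us) (xu_braid n' 1 us')"
    and max: "count_list (cyc_class (xu_braid n 1 us)) R = sum_list us"
  shows "n' \<le> n"
    and "n' = n \<Longrightarrow> sum_list us' = sum_list us \<and>
           count_list (cyc_class (xu_braid n 1 us')) R = sum_list us'"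
proof -
  have exp: "2 * n + int (sum_list us) = 2 * n' + int (sum_list us')"
    using braid_conj_exp_sum [OF conj] by (simp add: exp_sum_xu_braid)
  have count: "count_list (cyc_class (xu_braid n' 1 us')) R = count_list (cyc_class (xu_braid n 1 us)) R"
    using rotation_of_count_list [OF braid_conj_cyc_class [OF conj]] .
  then have "sum_list us \<le> sum_list us'"
    using count_R_cyc_class_le [OF pos(2), of n'] max by simp
  then show "n' \<le> n"
    using exp by linarith
  show "n' = n \<Longrightarrow> sum_list us' = sum_list us \<and>
      count_list (cyc_class (xu_braid n 1 us')) R = sum_list us'"
    using exp count max by simp
qed

lemma length_le_sum_list: "\<forall>u\<in>set us. u \<ge> 1 \<Longrightarrow> length us \<le> sum_list (us :: nat list)"
  by (induction us) auto

lemma in_xu_nf_iff: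
  "in_xu_nf n us \<longleftrightarrow> (\<forall>n' us'. (\<forall>u\<in>set us'. u \<ge> 1) \<and>
      braid_conj (xu_braid n 1 us) (xu_braid n' 1 us') \<longrightarrow> xu_tuple_le n us n' us')"
  unfolding in_xu_nf_def xu_eval_xu_word ..

section \<open>Words in normal form\<close>

lemma in_xu_nf_Nil: "in_xu_nf n []"
  unfolding in_xu_nf_iff
proof (intro allI impI, elim conjE)
  fix n' us' assume pos': "\<forall>u\<in>set us'. u \<ge> 1" and conj: "braid_conj (xu_braid n 1 []) (xu_braid n' 1 us')"
  have "2 * n = 2 * n' + int (sum_list us')"
    using braid_conj_exp_sum [OF conj] by (simp add: exp_sum_xu_braid)
  moreover have "sum_list us' = 0 \<Longrightarrow> us' = []"
    using length_le_sum_list [OF pos'] by (metis le_zero_eq length_0_conv)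
  ultimately show "xu_tuple_le n [] n' us'"
    by (cases "n' = n") (auto simp: xu_tuple_le_def lex_le_def)
qed

lemma in_xu_nf_singleton:
  assumes "u \<ge> 1" "n mod 3 = 1 \<longrightarrow> u = 1"
  shows "in_xu_nf n [u]"
  unfolding in_xu_nf_iff
proof (intro allI impI, elim conjE)
  fix n' us' assume pos': "\<forall>u\<in>set us'. u \<ge> 1" and conj: "braid_conj (xu_braid n 1 [u]) (xu_braid n' 1 us')"
  have "(n + 1) mod 3 \<noteq> 2 \<or> sum_list [u] = 1"
    using assms(2) by (cases n rule: mod3_cases) (auto, presburger+)
  then have "count_list (cyc_class (xu_braid n 1 [u])) R = sum_list [u]"
    using assms(1) by (intro count_R_cyc_class_eq) auto
  note bound = xu_braid_conj_delta_le [OF _ pos' conj this]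
  show "xu_tuple_le n [u] n' us'"
  proof (cases "n' = n")
    case True
    then have "sum_list us' = u" using bound(2) assms(1) by simp
    with \<open>u \<ge> 1\<close> have "us' \<noteq> []" by auto
    then consider "us' = [u]" | "length us' > 1"
      using \<open>sum_list us' = u\<close> by (cases us' rule: remdups_adj.cases) auto
    then show ?thesis
      using True by cases (auto simp: xu_tuple_le_def lex_le_def)
  next
    case False
    then show ?thesis
      using bound(1) assms(1) by (simp add: xu_tuple_le_def)
  qed
qed

lemma in_xu_nf_rotation_minimal:
  assumes pos: "\<forall>u\<in>set us. u \<ge> 1"
    and len: "length us \<ge> 2" and mod0: "(n + int (length us)) mod 3 = 0"
    and min: "\<forall>k < length us. lex_le us (rotate k us)"
  shows "in_xu_nf n us"
  unfolding in_xu_nf_iff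
proof (intro allI impI, elim conjE)
  fix n' us' assume pos': "\<forall>u\<in>set us'. u \<ge> 1" and conj: "braid_conj (xu_braid n 1 us) (xu_braid n' 1 us')"
  have ne: "us \<noteq> []" using len by auto
  have "count_list (cyc_class (xu_braid n 1 us)) R = sum_list us"
    using mod0 by (intro count_R_cyc_class_eq [OF pos]) simp
  note bound = xu_braid_conj_delta_le [OF pos pos' conj this]
  show "xu_tuple_le n us n' us'"
  proof (cases "n' = n")
    case False
    then show ?thesis using bound(1) by (simp add: xu_tuple_le_def)
  next
    case True
    have sum: "sum_list us' = sum_list us"
      and max': "count_list (cyc_class (xu_braid n 1 us')) R = sum_list us'"
      using bound(2) [OF True] by auto
    have "sum_list us \<ge> 2" using length_le_sum_list [OF pos] len by simp
    then have "sum_list us' \<ge> 2" using sum by linarith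
    then have ne': "us' \<noteq> []" by auto
    have rot: "rotation_of (cyc_class (xu_braid n 1 us')) (cyc_class (xu_braid n 1 us))"
      using braid_conj_cyc_class [OF conj] True by simp
    show ?thesis
    proof (cases "n + int (length us')" rule: mod3_cases)
      case 1
      have "rotation_of (cword us') (cword us)"
        using rotation_of_trans [OF rotation_of_sym rot]
          rotation_cyc_class_xu_braid [OF pos', of n] rotation_cyc_class_xu_braid [OF pos, of n]
          cyc_reduce_cword_mod0 [OF ne' 1] cyc_reduce_cword_mod0 [OF ne mod0]
        by (metis rotation_of_sym rotation_of_trans)
      then obtain k where k: "us' = rotate k us"
        using rotation_of_cword [OF pos pos'] by blast
      have "lex_le us (rotate (k mod length us) us)"
        using min ne by simp
      then show ?thesis
        using True k by (simp add: xu_tuple_le_def rotate_conv_mod [symmetric])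
    next
      case 2
      have "length us' - 1 = length us"
        using count_S_cyc_class_mod1 [OF ne' 2 pos'] count_S_cyc_class_mod0 [OF ne mod0 pos]
          rotation_of_count_list [OF rot] by simp
      then show ?thesis
        using True ne' by (cases us') (auto simp: xu_tuple_le_def)
    next
      case 3
      then have "sum_list us' = 1"
        using count_R_cyc_class_less [OF pos' ne' 3] max' by fastforce
      then show ?thesis
        using sum \<open>sum_list us \<ge> 2\<close> by simp
    qed
  qed
qed

section \<open>Words not in normal form\<close>

lemma not_in_xu_nf_if_conj_delta_greater:
  assumes "braid_conj (xu_braid n 1 us) (xu_braid n2 j us2)" "n < n2"
  shows "\<not> in_xu_nf n us"
proof -
  obtain n' j' us' where h: "xu_braid n2 j us2 \<approx> xu_braid n' j' us'" "n2 \<le> n'" "\<forall>u\<in>set us'. u \<ge> 1"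
    using xu_braid_remove_zeros by blast
  have "braid_conj (xu_braid n 1 us) (xu_braid n' 1 us')"
    using braid_conj_trans [OF braid_conj_braid_eq [OF assms(1) h(1)] xu_braid_conj_start] .
  moreover have "\<not> xu_tuple_le n us n' us'"
    using h(2) assms(2) by (simp add: xu_tuple_le_def)
  ultimately show ?thesis
    using h(3) unfolding in_xu_nf_iff by blast
qed

text \<open>Conjugation moves the last exponent to the front, leaving a gap after it;
  \<open>\<tau>\<^sub>i \<tau>\<^sub>i\<^sub>+\<^sub>2 = \<delta>\<close> then raises the power of \<open>\<delta>\<close>.\<close>

lemma not_in_xu_nf_rotate_gap:
  assumes "xu_braid n 1 us = xu_braid n 1 (b # q @ [v])" "b \<ge> 1" "v \<ge> 1"
    and "(n + int (length q)) mod 3 = 0"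
  shows "\<not> in_xu_nf n us"
proof -
  have "(int (length (b # q)) + n + 1 + int 1) mod 3 = 0"
    using assms(4) by simp presburger
  from xu_braid_conj_rotate [OF this, of 1 v]
  have "braid_conj (xu_braid n 1 us) (xu_braid n (2 + int (length q) + n) ([] @ [v, 0, b] @ q))"
    using assms(1) by (simp add: add.assoc)
  also have "xu_braid n (2 + int (length q) + n) ([] @ [v, 0, b] @ q)
      \<approx> xu_braid (n + 1) (2 + int (length q) + n + 1) ([] @ [v - 1, b - 1] @ q)"
    by (rule xu_braid_gap [OF assms(3,2)])
  finally show ?thesis
    by (rule not_in_xu_nf_if_conj_delta_greater) simp
qed

lemma not_in_xu_nf_mod2:
  assumes pos: "\<forall>u\<in>set us. u \<ge> 1"
    and mod2: "(n + int (length us)) mod 3 = 2" and sum: "sum_list us \<ge> 2"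
  shows "\<not> in_xu_nf n us"
proof (cases "length us \<ge> 2")
  case True
  then obtain b q v where us: "us = b # q @ [v]"
    by (metis One_nat_def Suc_1 Suc_le_length_iff le_Suc_eq length_0_conv rev_exhaust
        list.size(3) not_less_eq_eq numeral_2_eq_2)
  show ?thesis
  proof (rule not_in_xu_nf_rotate_gap [of n us b q v])
    show "(n + int (length q)) mod 3 = 0"
      using mod2 us by simp presburger
  qed (use pos us in auto)
next
  case False
  then obtain u where us: "us = [u]"
    using sum by (cases us rule: remdups_adj.cases) auto
  have "u \<ge> 2" using sum us by simp
  have "n mod 3 = 1" using mod2 us by simp presburger
  have "xu_braid n 1 us = xu_braid n 1 ([] @ [u - 1, 0, 0, 1] @ [])"
    using xu_braid_merge [of n 1 "[]" "u - 1" 1 "[]"] \<open>u \<ge> 2\<close> us by simp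
  also have "\<dots> = xu_braid n 1 ((u - 1) # [0, 0] @ [1])"
    by simp
  finally show ?thesis
  proof (rule not_in_xu_nf_rotate_gap)
    show "(n + int (length [0, 0 :: nat])) mod 3 = 0"
      using \<open>n mod 3 = 1\<close> by simp presburger
  qed (use \<open>u \<ge> 2\<close> in auto)
qed

lemma not_in_xu_nf_mod1:
  assumes pos: "\<forall>u\<in>set us. u \<ge> 1"
    and mod1: "(n + int (length us)) mod 3 = 1" and len: "length us \<ge> 2"
  shows "\<not> in_xu_nf n us"
proof -
  obtain b q v where us: "us = b # q @ [v]"
    using len by (metis One_nat_def Suc_1 Suc_le_length_iff le_Suc_eq length_0_conv rev_exhaust
        list.size(3) not_less_eq_eq numeral_2_eq_2)
  have "(int (length (b # q)) + n + 1 + int 2) mod 3 = 0"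
    using mod1 us by simp presburger
  from xu_braid_conj_rotate [OF this, of 1 v]
  have "braid_conj (xu_braid n 1 us) (xu_braid n (1 + int (length (b # q)) + n) ([] @ [v, 0, 0, b] @ q))"
    using us by (simp add: numeral_2_eq_2)
  then have "braid_conj (xu_braid n 1 us) (xu_braid n 1 ((v + b) # q))"
    unfolding xu_braid_merge using braid_conj_trans xu_braid_conj_start by fastforce
  moreover have "\<forall>u\<in>set ((v + b) # q). u \<ge> 1"
    using pos us by auto
  moreover have "\<not> xu_tuple_le n us n ((v + b) # q)"
    using us by (simp add: xu_tuple_le_def)
  ultimately show ?thesis
    unfolding in_xu_nf_iff by blast
qed

lemma not_in_xu_nf_mod0:
  assumes pos: "\<forall>u\<in>set us. u \<ge> 1"
    and mod0: "(n + int (length us)) mod 3 = 0" and not_min: "\<not> lex_le us (rotate k us)"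
  shows "\<not> in_xu_nf n us"
proof -
  have "braid_conj (xu_braid n 1 us) (xu_braid n 1 (rotate k us))"
    by (rule xu_braid_conj_rotate_any [OF mod0])
  moreover have "\<forall>u\<in>set (rotate k us). u \<ge> 1"
    using pos by simp
  moreover have "\<not> xu_tuple_le n us n (rotate k us)"
    using not_min by (simp add: xu_tuple_le_def)
  ultimately show ?thesis
    unfolding in_xu_nf_iff by blast
qed

theorem lemma2p3:
  fixes n :: int and us :: "nat list"
  assumes "\<forall>u\<in>set us. u \<ge> 1"
  shows "in_xu_nf n us \<longleftrightarrow>
    (us = [] \<or>
     (length us = 1 \<and> (n mod 3 = 1 \<longrightarrow> us ! 0 = 1)) \<or>
     (length us \<ge> 2 \<and> (n + int (length us)) mod 3 = 0 \<and>
        (\<forall>k < length us. lex_le us (rotate k us))))"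
proof
  assume nf: "in_xu_nf n us"
  consider "us = []" | u where "us = [u]" | "length us \<ge> 2"
    by (cases us rule: remdups_adj.cases) auto
  then show "us = [] \<or> (length us = 1 \<and> (n mod 3 = 1 \<longrightarrow> us ! 0 = 1)) \<or>
     (length us \<ge> 2 \<and> (n + int (length us)) mod 3 = 0 \<and> (\<forall>k < length us. lex_le us (rotate k us)))"
  proof cases
    case (2 u)
    have "n mod 3 = 1 \<Longrightarrow> (n + int (length us)) mod 3 = 2" using 2 by simp presburger
    then show ?thesis
      using not_in_xu_nf_mod2 [OF assms] nf 2 assms by fastforce
  next
    case 3
    have "sum_list us \<ge> 2" using length_le_sum_list [OF assms] 3 by simp
    then have "(n + int (length us)) mod 3 \<noteq> 2"
      using not_in_xu_nf_mod2 [OF assms] nf by blast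
    moreover have "(n + int (length us)) mod 3 \<noteq> 1"
      using not_in_xu_nf_mod1 [OF assms _ 3] nf by blast
    ultimately have mod0: "(n + int (length us)) mod 3 = 0"
      by (cases "n + int (length us)" rule: mod3_cases) auto
    have "\<forall>k < length us. lex_le us (rotate k us)"
      using not_in_xu_nf_mod0 [OF assms mod0] nf by blast
    with 3 mod0 show ?thesis by blast
  qed simp
next
  assume "us = [] \<or> (length us = 1 \<and> (n mod 3 = 1 \<longrightarrow> us ! 0 = 1)) \<or>
     (length us \<ge> 2 \<and> (n + int (length us)) mod 3 = 0 \<and> (\<forall>k < length us. lex_le us (rotate k us)))"
  then show "in_xu_nf n us"
    using in_xu_nf_Nil in_xu_nf_singleton in_xu_nf_rotation_minimal [OF assms] assms
    by (auto simp: length_Suc_conv)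
qed

end
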